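(* Let $k\in\mathbb T^2$ and $\lambda<\mathfrak z(k)$. Then for all $\mathrm U\in[0,\infty)$, $$0\le\mathfrak T(\mathrm U,k,\lambda)-\mathfrak T(\infty,k,\lambda)\le\frac{R_{\mathfrak d,\mathfrak d}}{1+\mathrm UR_{\mathfrak s,\mathfrak s}},$$ where $\mathfrak T(\infty,k,\lambda):=R_{\mathfrak s,\mathfrak s}^{-1}\big(R_{\mathfrak d,\mathfrak d}R_{\mathfrak s,\mathfrak s}-|R_{\mathfrak s,\mathfrak d}|^2\big)\ge0$.
   Context: Notation: $\mathbb T^2=[-\pi,\pi)^2$ with normalized Haar measure $\nu$; $L^2(\mathbb T^2)=L^2(\mathbb T^2,\nu)$, scalar product antilinear in the first argument. For $f\in\ell^1(\mathbb Z^2)$, $\hat f(k)=\sum_{x}e^{ik\cdot x}f(x)$, $k\in\mathbb R^2$. $\hat{\mathfrak e}_x(p)=e^{ip\cdot x}$; $P_x$ the orthogonal projection onto $\mathbb C\hat{\mathfrak e}_x$; $M_g$ multiplication by $g$; $\cos(q):=\cos q_1+\cos q_2$. Data: $\epsilon\ge0$; $\mathrm u:\mathbb Z^2\to[0,\infty)$, $\mathfrak p_1,\mathfrak p_2:\mathbb Z^2\to\mathbb R$, invariant under $90^\circ$-rotations, $\mathrm u$ absolutely summable, $\sum_z e^{\alpha_0|z|}|\mathfrak p_j(z)|<\infty$ for some $\alpha_0>0$, $\mathfrak p_2(z)=0$ for $z\notin(2\mathbb Z)^2$, $\mathfrak p_1+\mathfrak p_2\neq0$, and for every $k$ some $x$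 with $\mathfrak p_2(x)\neq-e^{ik\cdot x/2}\mathfrak p_1(x)$. For $k,p\in\mathbb T^2$: $\mathfrak f(k)(p)=\epsilon(4-\cos(p+k)-\cos p)$, $\mathfrak d(k)(p)=\hat{\mathfrak p}_1(k+p)+\hat{\mathfrak p}_2(k/2+p)$, $\mathfrak z(k)=4\epsilon-2\epsilon\cos(k/2)$. $B_{1,1}(k)=M_{\mathfrak f(k)}+\sum_x\mathrm u(x)P_x$, $A_{1,1}(\mathrm U,k)=B_{1,1}(k)+\mathrm UP_0$; $\mathfrak T(\mathrm U,k,\lambda):=\langle\mathfrak d(k),(A_{1,1}(\mathrm U,k)-\lambda\mathfrak 1)^{-1}\mathfrak d(k)\rangle$ for $\mathrm U\ge0$. Let $\mathfrak s$ be the constant function $1$ and, with $G:=(B_{1,1}(k)-\lambda\mathfrak 1)^{-1}$: $R_{\mathfrak s,\mathfrak s}=\langle\mathfrak s,G\mathfrak s\rangle$, $R_{\mathfrak s,\mathfrak d}=\langle\mathfrak s,G\mathfrak d(k)\rangle$, $R_{\mathfrak d,\mathfrak d}=\langle\mathfrak d(k),G\mathfrak d(k)\rangle$. *)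

theory Defs
  imports "HOL-Analysis.Analysis"
begin

text \<open>Points of the torus are represented by pairs of reals in the fundamental
domain [-pi,pi) x [-pi,pi); lattice points by pairs of integers.
Elements of L^2(T^2) are represented by complex functions on real x real,
only their values on the fundamental domain matter.\<close>

definition T2 :: "(real \<times> real) set" where
  "T2 = {-pi..<pi} \<times> {-pi..<pi}"

definition dotp :: "real \<times> real \<Rightarrow> int \<times> int \<Rightarrow> real" where
  "dotp k x = fst k * of_int (fst x) + snd k * of_int (snd x)"

definition znorm :: "int \<times> int \<Rightarrow> real" where
  "znorm z = sqrt (of_int (fst z) ^ 2 + of_int (snd z) ^ 2)"

definition rot90 :: "int \<times> int \<Rightarrow> int \<times> int" where
  "rot90 z = (- snd z, fst z)"

definition fhat :: "(int \<times> int \<Rightarrow> real) \<Rightarrow> real \<times> real \<Rightarrow> complex" where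
  "fhat f k = (\<Sum>\<^sub>\<infinity>x\<in>UNIV. exp (\<i> * of_real (dotp k x)) * of_real (f x))"

definition cos2 :: "real \<times> real \<Rightarrow> real" where
  "cos2 q = cos (fst q) + cos (snd q)"

definition half :: "real \<times> real \<Rightarrow> real \<times> real" where
  "half k = (fst k / 2, snd k / 2)"

definition ehat :: "int \<times> int \<Rightarrow> real \<times> real \<Rightarrow> complex" where
  "ehat x p = exp (\<i> * of_real (dotp p x))"

definition sqint :: "(real \<times> real \<Rightarrow> complex) \<Rightarrow> bool" where
  "sqint g \<longleftrightarrow> g \<in> borel_measurable lborel \<and>
     set_integrable lborel T2 (\<lambda>p. (cmod (g p))\<^sup>2)"

definition l2inner :: "(real \<times> real \<Rightarrow> complex) \<Rightarrow> (real \<times> real \<Rightarrow> complex) \<Rightarrow> complex" where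
  "l2inner f g = of_real (1 / (4 * pi\<^sup>2)) * (LINT p:T2|lborel. cnj (f p) * g p)"

definition ffk :: "real \<Rightarrow> real \<times> real \<Rightarrow> real \<times> real \<Rightarrow> real" where
  "ffk eps k p = eps * (4 - cos2 (p + k) - cos2 p)"

definition ddk :: "(int \<times> int \<Rightarrow> real) \<Rightarrow> (int \<times> int \<Rightarrow> real) \<Rightarrow> real \<times> real \<Rightarrow> real \<times> real \<Rightarrow> complex" where
  "ddk p1 p2 k p = fhat p1 (k + p) + fhat p2 (half k + p)"

definition zzk :: "real \<Rightarrow> real \<times> real \<Rightarrow> real" where
  "zzk eps k = 4 * eps - 2 * eps * cos2 (half k)"

definition Aop :: "real \<Rightarrow> (int \<times> int \<Rightarrow> real) \<Rightarrow> real \<Rightarrow> real \<times> real \<Rightarrow>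
    (real \<times> real \<Rightarrow> complex) \<Rightarrow> real \<times> real \<Rightarrow> complex" where
  "Aop eps u U k g p = of_real (ffk eps k p) * g p
     + (\<Sum>\<^sub>\<infinity>x\<in>UNIV. of_real (u x) * l2inner (ehat x) g * ehat x p)
     + of_real U * l2inner (ehat (0,0)) g * ehat (0,0) p"

text \<open>Resolvent form <f, (A_{1,1}(U,k) - lambda)^{-1} h>: the value <f, g> where
g in L^2 solves (A_{1,1}(U,k) - lambda) g = h (nu-a.e. on T^2).\<close>
definition rform :: "real \<Rightarrow> (int \<times> int \<Rightarrow> real) \<Rightarrow> real \<Rightarrow> real \<times> real \<Rightarrow> real \<Rightarrow>
    (real \<times> real \<Rightarrow> complex) \<Rightarrow> (real \<times> real \<Rightarrow> complex) \<Rightarrow> complex" where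
  "rform eps u U k lam f h = (THE c. \<exists>g. sqint g \<and>
      (AE p in lborel. p \<in> T2 \<longrightarrow> Aop eps u U k g p - of_real lam * g p = h p) \<and>
      c = l2inner f g)"

definition TT :: "real \<Rightarrow> (int \<times> int \<Rightarrow> real) \<Rightarrow> (int \<times> int \<Rightarrow> real) \<Rightarrow> (int \<times> int \<Rightarrow> real)
    \<Rightarrow> real \<Rightarrow> real \<times> real \<Rightarrow> real \<Rightarrow> complex" where
  "TT eps u p1 p2 U k lam = rform eps u U k lam (ddk p1 p2 k) (ddk p1 p2 k)"

definition sone :: "real \<times> real \<Rightarrow> complex" where
  "sone p = 1"

definition Rss where "Rss eps u k lam = rform eps u 0 k lam sone sone"
definition Rsd where "Rsd eps u p1 p2 k lam = rform eps u 0 k lam sone (ddk p1 p2 k)"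
definition Rdd where "Rdd eps u p1 p2 k lam = rform eps u 0 k lam (ddk p1 p2 k) (ddk p1 p2 k)"

definition Tinf where
  "Tinf eps u p1 p2 k lam =
     (Rdd eps u p1 p2 k lam * Rss eps u k lam - of_real ((cmod (Rsd eps u p1 p2 k lam))\<^sup>2))
       / Rss eps u k lam"

end

theory Submission
  imports Defs
begin

(* With B := B_{1,1}(k) - lambda = M_{f(k)-lambda} + sum_x u(x) P_x, the hypothesis
   lambda < z(k) <= min f(k) makes B bounded, self-adjoint and coercive on L^2(T^2), hence
   invertible; so is the rank-one perturbation A_{1,1}(U,k) - lambda = B + U P_0.  With
   g_s = B^{-1} 1 and g_d = B^{-1} d(k), the solution of (B + U P_0) g = d(k) is g_d - beta g_s,
   beta = U <1, g_d> / (1 + U <1, g_s>), whence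
   T(U) = R_dd - U |R_sd|^2 / (1 + U R_ss)  and  T(U) - T(oo) = |R_sd|^2 / (R_ss (1 + U R_ss)).
   This lies between 0 and R_dd / (1 + U R_ss) since |R_sd|^2 <= R_ss R_dd is the Cauchy-Schwarz
   inequality for the positive form <., B .> evaluated at g_s and g_d. *)

section \<open>The torus measure\<close>

definition torus :: "(real \<times> real) measure" where
  "torus = restrict_space lborel T2"

definition haar_weight :: real where
  "haar_weight = 1 / (4 * pi\<^sup>2)"

lemma sets_T2 [measurable]: "T2 \<in> sets lborel"
  unfolding T2_def by (metis lborel_prod sets_lborel atLeastLessThan_borel pair_measureI)

lemma sets_T2_borel [measurable]: "T2 \<in> sets borel"
  using sets_T2 by simp

lemma emeasure_T2: "emeasure lborel T2 = ennreal (4 * pi\<^sup>2)"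
proof -
  have "emeasure lborel T2 = emeasure (lborel \<Otimes>\<^sub>M lborel) ({-pi..<pi} \<times> {-pi..<pi::real})"
    by (simp add: T2_def lborel_prod)
  also have "\<dots> = emeasure lborel {-pi..<pi::real} * emeasure lborel {-pi..<pi::real}"
    by (intro sigma_finite_measure.emeasure_pair_measure_Times)
       (auto simp: lborel.sigma_finite_measure_axioms)
  also have "\<dots> = ennreal (4 * pi\<^sup>2)"
    by (simp add: ennreal_mult'[symmetric] power2_eq_square)
  finally show ?thesis .
qed

lemma space_torus [simp]: "space torus = T2"
  by (simp add: torus_def space_restrict_space)

lemma emeasure_torus: "emeasure torus T2 = ennreal (4 * pi\<^sup>2)"
  by (simp add: torus_def emeasure_restrict_space emeasure_T2 space_restrict_space)

interpretation torus: finite_measure torus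
  by (rule finite_measureI) (simp add: emeasure_torus)

lemma haar_weight_pos: "haar_weight > 0"
  by (simp add: haar_weight_def)

lemma haar_weight_measure_torus: "haar_weight * measure torus T2 = 1"
  using emeasure_torus by (simp add: haar_weight_def measure_def)

lemma integral_torus:
  fixes f :: "real \<times> real \<Rightarrow> 'b::{banach, second_countable_topology}"
  shows "integral\<^sup>L torus f = (LINT p:T2|lborel. f p)"
  unfolding torus_def set_lebesgue_integral_def by (rule integral_restrict_space) simp

lemma integrable_torus_iff:
  fixes f :: "real \<times> real \<Rightarrow> 'b::{banach, second_countable_topology}"
  shows "integrable torus f \<longleftrightarrow> set_integrable lborel T2 f"
  unfolding torus_def set_integrable_def by (rule integrable_restrict_space) simp

lemma l2inner_torus: "l2inner f g = haar_weight * integral\<^sup>L torus (\<lambda>p. cnj (f p) * g p)"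
  by (simp add: l2inner_def integral_torus haar_weight_def)

lemma borel_measurable_torusI: "f \<in> borel_measurable lborel \<Longrightarrow> f \<in> borel_measurable torus"
  unfolding torus_def by (rule measurable_restrict_space1)

lemma AE_torus_iff: "(AE p in lborel. p \<in> T2 \<longrightarrow> P p) \<longleftrightarrow> (AE p in torus. P p)"
  unfolding torus_def by (subst AE_restrict_space_iff) auto

section \<open>Absolutely summable families on the lattice\<close>

abbreviation norm_summable :: "(int \<times> int \<Rightarrow> 'a::real_normed_vector) \<Rightarrow> bool" where
  "norm_summable f \<equiv> (\<lambda>x. norm (f x)) summable_on UNIV"

text \<open>Sums over the lattice are transported to series along an enumeration, where the
  interchange of sums with integrals and the measurability of limits are available.\<close>

definition enum_Z2 :: "nat \<Rightarrow> int \<times> int" where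
  "enum_Z2 = from_nat_into UNIV"

lemma bij_enum_Z2: "bij_betw enum_Z2 UNIV UNIV"
proof -
  have "infinite (UNIV :: (int \<times> int) set)"
    by (simp add: finite_prod infinite_UNIV_int)
  then show ?thesis unfolding enum_Z2_def by (intro bij_betw_from_nat_into) auto
qed

lemma suminf_eq_infsum_nat:
  fixes f :: "nat \<Rightarrow> 'a::banach"
  assumes "summable (\<lambda>n. norm (f n))"
  shows "f summable_on UNIV" and "(\<Sum>n. f n) = (\<Sum>\<^sub>\<infinity>n. f n)"
proof -
  have "(f has_sum (\<Sum>n. f n)) UNIV"
    by (rule norm_summable_imp_has_sum[OF assms])
       (simp add: summable_sums summable_norm_cancel[OF assms])
  then show "f summable_on UNIV" "(\<Sum>n. f n) = (\<Sum>\<^sub>\<infinity>n. f n)"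
    by (auto simp: infsumI summable_on_def)
qed

lemma norm_summable_enum_Z2:
  fixes f :: "int \<times> int \<Rightarrow> 'a::banach"
  assumes "norm_summable f"
  shows "summable (\<lambda>n. norm (f (enum_Z2 n)))" and "infsum f UNIV = (\<Sum>n. f (enum_Z2 n))"
proof -
  have "(\<lambda>n. norm (f (enum_Z2 n))) summable_on UNIV"
    using summable_on_reindex_bij_betw[OF bij_enum_Z2, of "\<lambda>x. norm (f x)"] assms by simp
  then show s: "summable (\<lambda>n. norm (f (enum_Z2 n)))" by (rule summable_on_imp_summable)
  then have "(\<Sum>n. f (enum_Z2 n)) = infsum (\<lambda>n. f (enum_Z2 n)) UNIV"
    by (rule suminf_eq_infsum_nat(2))
  then show "infsum f UNIV = (\<Sum>n. f (enum_Z2 n))"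
    using infsum_reindex_bij_betw[OF bij_enum_Z2, of f] by simp
qed

lemma norm_summable_mult_bounded:
  fixes a b :: "int \<times> int \<Rightarrow> complex"
  assumes "norm_summable a" and "\<And>x. norm (b x) \<le> C"
  shows "norm_summable (\<lambda>x. a x * b x)"
proof (rule Infinite_Sum.abs_summable_on_comparison_test)
  show "norm_summable (\<lambda>x. a x * C)"
    using summable_on_cmult_left[OF assms(1), of "\<bar>C\<bar>"] by (simp add: norm_mult)
  show "norm (a x * b x) \<le> norm (a x * C)" for x
    using assms(2)[of x] by (auto simp: norm_mult intro!: mult_left_mono)
qed

lemma borel_measurable_infsum_bounded:
  fixes a :: "int \<times> int \<Rightarrow> complex" and \<phi> :: "int \<times> int \<Rightarrow> 'p \<Rightarrow> complex"
  assumes a: "norm_summable a" and \<phi>: "\<And>x. \<phi> x \<in> borel_measurable M"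
    and bound: "\<And>x p. norm (\<phi> x p) \<le> 1"
  shows "(\<lambda>p. \<Sum>\<^sub>\<infinity>x. a x * \<phi> x p) \<in> borel_measurable M"
proof -
  have "(\<lambda>p. \<Sum>n. a (enum_Z2 n) * \<phi> (enum_Z2 n) p) \<in> borel_measurable M"
    using \<phi> by measurable
  moreover have "(\<Sum>\<^sub>\<infinity>x. a x * \<phi> x p) = (\<Sum>n. a (enum_Z2 n) * \<phi> (enum_Z2 n) p)" for p
    by (rule norm_summable_enum_Z2(2)[OF norm_summable_mult_bounded[OF a bound]])
  ultimately show ?thesis by simp
qed

lemma norm_infsum_bounded_le:
  fixes a :: "int \<times> int \<Rightarrow> complex" and \<phi> :: "int \<times> int \<Rightarrow> 'p \<Rightarrow> complex"
  assumes a: "norm_summable a" and bound: "\<And>x p. norm (\<phi> x p) \<le> 1"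
  shows "norm (\<Sum>\<^sub>\<infinity>x. a x * \<phi> x p) \<le> (\<Sum>\<^sub>\<infinity>x. norm (a x))"
proof -
  have "norm (\<Sum>\<^sub>\<infinity>x. a x * \<phi> x p) \<le> (\<Sum>\<^sub>\<infinity>x. norm (a x * \<phi> x p))"
    by (rule norm_infsum_bound[OF norm_summable_mult_bounded[OF a bound]])
  also have "\<dots> \<le> (\<Sum>\<^sub>\<infinity>x. norm (a x))"
    using bound
    by (intro infsum_mono[OF norm_summable_mult_bounded[OF a bound] a])
       (auto simp: norm_mult intro!: mult_left_le)
  finally show ?thesis .
qed

lemma integral_suminf_dominated:
  fixes f :: "nat \<Rightarrow> 'p \<Rightarrow> 'a::{banach, second_countable_topology}"
  assumes f: "\<And>n. integrable M (f n)" and G: "integrable M G" and b: "summable b"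
    and bound: "\<And>n p. norm (f n p) \<le> G p * b n"
  shows "integral\<^sup>L M (\<lambda>p. \<Sum>n. f n p) = (\<Sum>n. integral\<^sup>L M (f n))"
proof (rule integral_suminf[OF f])
  show "AE p in M. summable (\<lambda>n. norm (f n p))"
    using bound by (intro AE_I2 summable_comparison_test'[OF summable_mult[OF b]]) auto
  show "summable (\<lambda>n. integral\<^sup>L M (\<lambda>p. norm (f n p)))"
  proof (rule summable_comparison_test'[OF summable_mult[OF b, of "integral\<^sup>L M G"]])
    fix n
    have "integral\<^sup>L M (\<lambda>p. norm (f n p)) \<le> integral\<^sup>L M (\<lambda>p. G p * b n)"
      by (intro integral_mono integrable_norm f integrable_mult_left G bound)
    then show "norm (integral\<^sup>L M (\<lambda>p. norm (f n p))) \<le> integral\<^sup>L M G * b n"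
      by (simp add: integral_nonneg_AE)
  qed
qed

lemma integral_mult_infsum:
  fixes a :: "int \<times> int \<Rightarrow> complex" and \<phi> :: "int \<times> int \<Rightarrow> 'p \<Rightarrow> complex"
  assumes a: "norm_summable a" and \<phi>: "\<And>x. \<phi> x \<in> borel_measurable M"
    and bound: "\<And>x p. norm (\<phi> x p) \<le> 1" and F: "integrable M F"
  shows "norm_summable (\<lambda>x. a x * integral\<^sup>L M (\<lambda>p. F p * \<phi> x p))"
    and "integral\<^sup>L M (\<lambda>p. F p * (\<Sum>\<^sub>\<infinity>x. a x * \<phi> x p))
       = (\<Sum>\<^sub>\<infinity>x. a x * integral\<^sup>L M (\<lambda>p. F p * \<phi> x p))"
proof -
  have F\<phi>_le: "norm (F p * \<phi> x p) \<le> norm (F p)" for x p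
    unfolding norm_mult by (rule mult_left_le[OF bound norm_ge_zero])
  have F\<phi>: "integrable M (\<lambda>p. F p * \<phi> x p)" for x
  proof (rule Bochner_Integration.integrable_bound[OF integrable_norm[OF F]])
    show "(\<lambda>p. F p * \<phi> x p) \<in> borel_measurable M"
      using borel_measurable_integrable[OF F] \<phi>[of x] by measurable
    show "AE p in M. norm (F p * \<phi> x p) \<le> norm (norm (F p))"
      using F\<phi>_le by simp
  qed
  have "norm (integral\<^sup>L M (\<lambda>p. F p * \<phi> x p)) \<le> integral\<^sup>L M (\<lambda>p. norm (F p))" for x
  proof -
    have "norm (integral\<^sup>L M (\<lambda>p. F p * \<phi> x p)) \<le> integral\<^sup>L M (\<lambda>p. norm (F p * \<phi> x p))"
      by (rule integral_norm_bound)
    also have "\<dots> \<le> integral\<^sup>L M (\<lambda>p. norm (F p))"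
      using F F\<phi> F\<phi>_le by (intro integral_mono integrable_norm)
    finally show ?thesis .
  qed
  then show sum: "norm_summable (\<lambda>x. a x * integral\<^sup>L M (\<lambda>p. F p * \<phi> x p))"
    by (rule norm_summable_mult_bounded[OF a])
  define e where "e = enum_Z2"
  have "integral\<^sup>L M (\<lambda>p. F p * (\<Sum>\<^sub>\<infinity>x. a x * \<phi> x p))
      = integral\<^sup>L M (\<lambda>p. \<Sum>n. a (e n) * (F p * \<phi> (e n) p))"
  proof (rule Bochner_Integration.integral_cong[OF refl])
    fix p
    have "summable (\<lambda>n. a (e n) * \<phi> (e n) p)"
      unfolding e_def
      by (rule summable_norm_cancel[OF norm_summable_enum_Z2(1)[OF norm_summable_mult_bounded[OF a bound]]])
    then have "F p * (\<Sum>n. a (e n) * \<phi> (e n) p) = (\<Sum>n. F p * (a (e n) * \<phi> (e n) p))"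
      by (rule suminf_mult[symmetric])
    then show "F p * (\<Sum>\<^sub>\<infinity>x. a x * \<phi> x p) = (\<Sum>n. a (e n) * (F p * \<phi> (e n) p))"
      unfolding e_def norm_summable_enum_Z2(2)[OF norm_summable_mult_bounded[OF a bound]]
      by (simp only: mult.left_commute)
  qed
  also have "\<dots> = (\<Sum>n. integral\<^sup>L M (\<lambda>p. a (e n) * (F p * \<phi> (e n) p)))"
  proof (rule integral_suminf_dominated[where G = "\<lambda>p. norm (F p)"])
    show "summable (\<lambda>n. norm (a (e n)))" unfolding e_def by (rule norm_summable_enum_Z2(1)[OF a])
    show "norm (a (e n) * (F p * \<phi> (e n) p)) \<le> norm (F p) * norm (a (e n))" for n p
      using mult_left_mono[OF F\<phi>_le[of p "e n"] norm_ge_zero[of "a (e n)"]]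
      by (simp add: norm_mult[of "a _"] mult.commute)
    show "integrable M (\<lambda>p. a (e n) * (F p * \<phi> (e n) p))" for n
      using F\<phi> by simp
  qed (use F in simp)
  also have "\<dots> = (\<Sum>\<^sub>\<infinity>x. a x * integral\<^sup>L M (\<lambda>p. F p * \<phi> x p))"
    unfolding e_def norm_summable_enum_Z2(2)[OF sum] by simp
  finally show "integral\<^sup>L M (\<lambda>p. F p * (\<Sum>\<^sub>\<infinity>x. a x * \<phi> x p))
      = (\<Sum>\<^sub>\<infinity>x. a x * integral\<^sup>L M (\<lambda>p. F p * \<phi> x p))" .
qed

lemma AE_summable_norm:
  fixes f :: "nat \<Rightarrow> 'a \<Rightarrow> 'b::{banach, second_countable_topology}"
  assumes f: "\<And>n. integrable M (f n)" and s: "summable (\<lambda>n. integral\<^sup>L M (\<lambda>x. norm (f n x)))"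
  shows "AE x in M. summable (\<lambda>n. norm (f n x))"
proof -
  have [measurable]: "f n \<in> borel_measurable M" for n using f[of n] by simp
  have "(\<integral>\<^sup>+ x. (\<Sum>n. ennreal (norm (f n x))) \<partial>M) = (\<Sum>n. \<integral>\<^sup>+ x. ennreal (norm (f n x)) \<partial>M)"
    by (rule nn_integral_suminf) measurable
  also have "\<dots> = (\<Sum>n. ennreal (integral\<^sup>L M (\<lambda>x. norm (f n x))))"
    by (intro arg_cong[where f=suminf] ext nn_integral_eq_integral integrable_norm f) auto
  also have "\<dots> \<noteq> \<infinity>"
    using ennreal_suminf_neq_top[OF s integral_nonneg_AE[OF AE_I2[OF norm_ge_zero]]] by simp
  finally have "AE x in M. (\<Sum>n. ennreal (norm (f n x))) \<noteq> \<infinity>"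
    by (intro nn_integral_PInf_AE) auto
  then show ?thesis
    by eventually_elim (rule summable_suminf_not_top, auto)
qed

lemma infsum_suminf_swap:
  fixes F :: "int \<times> int \<Rightarrow> nat \<Rightarrow> complex" and u :: "int \<times> int \<Rightarrow> real" and b :: "nat \<Rightarrow> real"
  assumes u: "u summable_on UNIV" "\<And>x. 0 \<le> u x" and b: "summable b" "\<And>n. 0 \<le> b n"
    and F: "\<And>x n. norm (F x n) \<le> u x * b n"
  shows "summable (\<lambda>n. norm (\<Sum>\<^sub>\<infinity>x. F x n))"
    and "(\<Sum>\<^sub>\<infinity>x. \<Sum>n. F x n) = (\<Sum>n. \<Sum>\<^sub>\<infinity>x. F x n)"
proof -
  have ub: "summable (\<lambda>n. norm (u x * b n))" for x
    using u(2) b by (simp add: abs_mult)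
  have "norm (\<Sum>\<^sub>\<infinity>x. F x n) \<le> infsum u UNIV * b n" for n
  proof -
    have s1: "(\<lambda>x. u x * b n) summable_on UNIV" by (rule summable_on_cmult_left[OF u(1)])
    have s2: "(\<lambda>x. F x n) summable_on UNIV"
      by (rule abs_summable_summable[OF Infinite_Sum.abs_summable_on_comparison_test'[OF s1 F]])
    have "norm (\<Sum>\<^sub>\<infinity>x. F x n) \<le> (\<Sum>\<^sub>\<infinity>x. u x * b n)"
      by (rule norm_infsum_le[OF has_sum_infsum[OF s2] has_sum_infsum[OF s1] F])
    also have "\<dots> = infsum u UNIV * b n" by (rule infsum_cmult_left) (simp add: u(1))
    finally show ?thesis .
  qed
  then show sn: "summable (\<lambda>n. norm (\<Sum>\<^sub>\<infinity>x. F x n))"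
    by (intro summable_comparison_test'[OF summable_mult[OF b(1), of "infsum u UNIV"]]) simp
  have "((\<lambda>n. u x * b n) has_sum u x * suminf b) UNIV" for x
  proof -
    have "((\<lambda>n. u x * b n) has_sum (\<Sum>n. u x * b n)) UNIV"
      by (rule norm_summable_imp_has_sum[OF ub]) (rule summable_sums[OF summable_mult[OF b(1)]])
    then show ?thesis by (simp add: suminf_mult[OF b(1)])
  qed
  then have "(\<lambda>(x, n). u x * b n) summable_on UNIV \<times> UNIV"
    by (intro summable_on_SigmaI[where g="\<lambda>x. u x * suminf b"])
       (use summable_on_cmult_left[OF u(1)] u(2) b(2) in auto)
  then have Fprod: "(\<lambda>(x, n). F x n) summable_on UNIV \<times> UNIV"
  proof (rule abs_summable_summable[OF Infinite_Sum.abs_summable_on_comparison_test'])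
    show "norm (case z of (x, n) \<Rightarrow> F x n) \<le> (case z of (x, n) \<Rightarrow> u x * b n)" for z
      by (cases z) (simp only: prod.case F)
  qed
  have "summable (\<lambda>n. norm (F x n))" for x
    by (rule summable_comparison_test'[OF ub[of x]]) (use F u(2) b(2) in \<open>auto simp: abs_mult\<close>)
  then have "(\<Sum>\<^sub>\<infinity>x. \<Sum>n. F x n) = (\<Sum>\<^sub>\<infinity>x. \<Sum>\<^sub>\<infinity>n. F x n)"
    by (intro infsum_cong suminf_eq_infsum_nat(2))
  also have "\<dots> = (\<Sum>\<^sub>\<infinity>n. \<Sum>\<^sub>\<infinity>x. F x n)"
    by (rule infsum_swap_banach[OF Fprod])
  also have "\<dots> = (\<Sum>n. \<Sum>\<^sub>\<infinity>x. F x n)"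
    by (rule suminf_eq_infsum_nat(2)[OF sn, symmetric])
  finally show "(\<Sum>\<^sub>\<infinity>x. \<Sum>n. F x n) = (\<Sum>n. \<Sum>\<^sub>\<infinity>x. F x n)" .
qed

section \<open>Square integrable functions on the torus\<close>

definition L2 :: "(real \<times> real \<Rightarrow> complex) \<Rightarrow> bool" where
  "L2 g \<longleftrightarrow> g \<in> borel_measurable torus \<and> integrable torus (\<lambda>p. (cmod (g p))\<^sup>2)"

lemma borel_measurable_cnj [measurable]:
  "f \<in> borel_measurable M \<Longrightarrow> (\<lambda>x. cnj (f x)) \<in> borel_measurable M"
  by (rule borel_measurable_continuous_on[OF continuous_on_cnj[OF continuous_on_id]])

lemma L2_borel_measurable: "L2 g \<Longrightarrow> g \<in> borel_measurable torus"
  by (simp add: L2_def)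

lemma L2_bounded:
  assumes "g \<in> borel_measurable torus" and "\<And>p. p \<in> T2 \<Longrightarrow> cmod (g p) \<le> C"
  shows "L2 g"
  unfolding L2_def
proof
  show "integrable torus (\<lambda>p. (cmod (g p))\<^sup>2)"
  proof (rule Bochner_Integration.integrable_bound[of _ "\<lambda>_. C\<^sup>2"])
    show "(\<lambda>p. (cmod (g p))\<^sup>2) \<in> borel_measurable torus" using assms(1) by measurable
    show "AE p in torus. norm ((cmod (g p))\<^sup>2) \<le> norm (C\<^sup>2)"
      using assms(2) by (intro AE_I2) (auto intro!: power_mono simp: abs_le_square_iff)
  qed simp
qed (fact assms(1))

lemma L2_const: "L2 (\<lambda>_. c)"
  by (rule L2_bounded[of _ "cmod c"]) auto

lemma L2_add:
  assumes "L2 f" and "L2 g"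
  shows "L2 (\<lambda>p. f p + g p)"
  unfolding L2_def
proof
  have [measurable]: "f \<in> borel_measurable torus" "g \<in> borel_measurable torus"
    using assms by (auto simp: L2_def)
  show "(\<lambda>p. f p + g p) \<in> borel_measurable torus" by measurable
  have le: "(cmod (a + b))\<^sup>2 \<le> 2 * (cmod a)\<^sup>2 + 2 * (cmod b)\<^sup>2" for a b :: complex
  proof -
    have "(cmod (a + b))\<^sup>2 \<le> (cmod a + cmod b)\<^sup>2"
      by (intro power_mono norm_triangle_ineq) simp
    also have "\<dots> \<le> 2 * (cmod a)\<^sup>2 + 2 * (cmod b)\<^sup>2"
      using sum_squares_ge_zero[of "cmod a - cmod b" 0] by (simp add: power2_eq_square algebra_simps)
    finally show ?thesis .
  qed
  show "integrable torus (\<lambda>p. (cmod (f p + g p))\<^sup>2)"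
  proof (rule Bochner_Integration.integrable_bound[of _ "\<lambda>p. 2 * (cmod (f p))\<^sup>2 + 2 * (cmod (g p))\<^sup>2"])
    show "integrable torus (\<lambda>p. 2 * (cmod (f p))\<^sup>2 + 2 * (cmod (g p))\<^sup>2)"
      using assms by (simp add: L2_def)
    show "(\<lambda>p. (cmod (f p + g p))\<^sup>2) \<in> borel_measurable torus" by measurable
    show "AE p in torus. norm ((cmod (f p + g p))\<^sup>2) \<le> norm (2 * (cmod (f p))\<^sup>2 + 2 * (cmod (g p))\<^sup>2)"
      using le by (intro AE_I2) simp
  qed
qed

lemma L2_mult_bounded:
  assumes "L2 g" and "m \<in> borel_measurable torus" and "\<And>p. p \<in> T2 \<Longrightarrow> cmod (m p) \<le> C"
  shows "L2 (\<lambda>p. m p * g p)"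
  unfolding L2_def
proof
  have [measurable]: "m \<in> borel_measurable torus" "g \<in> borel_measurable torus"
    using assms by (auto simp: L2_def)
  show "(\<lambda>p. m p * g p) \<in> borel_measurable torus" by measurable
  have le: "(cmod (m p * g p))\<^sup>2 \<le> C\<^sup>2 * (cmod (g p))\<^sup>2" if "p \<in> T2" for p
    using assms(3)[OF that] by (simp add: norm_mult power_mult_distrib mult_right_mono power_mono)
  show "integrable torus (\<lambda>p. (cmod (m p * g p))\<^sup>2)"
  proof (rule Bochner_Integration.integrable_bound[of _ "\<lambda>p. C\<^sup>2 * (cmod (g p))\<^sup>2"])
    show "integrable torus (\<lambda>p. C\<^sup>2 * (cmod (g p))\<^sup>2)"
      using assms(1) by (simp add: L2_def)
    show "(\<lambda>p. (cmod (m p * g p))\<^sup>2) \<in> borel_measurable torus" by measurable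
  qed (use le in \<open>auto intro!: AE_I2\<close>)
qed

lemma L2_scale: "L2 g \<Longrightarrow> L2 (\<lambda>p. c * g p)"
  using L2_mult_bounded[of g "\<lambda>_. c" "cmod c"] by simp

lemma L2_lincomb: "L2 f \<Longrightarrow> L2 g \<Longrightarrow> L2 (\<lambda>p. f p - t * g p)"
  using L2_add[OF _ L2_scale, of f g "- t"] by simp

lemma L2_norm:
  assumes "L2 g"
  shows "L2 (\<lambda>p. complex_of_real (cmod (g p)))"
proof -
  have [measurable]: "g \<in> borel_measurable torus" using assms by (simp add: L2_def)
  have "(\<lambda>p. complex_of_real (cmod (g p))) \<in> borel_measurable torus" by measurable
  then show ?thesis using assms by (simp add: L2_def)
qed

lemma integrable_cnj_mult:
  assumes "L2 f" and "L2 g"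
  shows "integrable torus (\<lambda>p. cnj (f p) * g p)"
proof (rule Bochner_Integration.integrable_bound[of _ "\<lambda>p. (cmod (f p))\<^sup>2 + (cmod (g p))\<^sup>2"])
  show "integrable torus (\<lambda>p. (cmod (f p))\<^sup>2 + (cmod (g p))\<^sup>2)"
    using assms by (simp add: L2_def)
  have [measurable]: "f \<in> borel_measurable torus" "g \<in> borel_measurable torus"
    using assms by (auto simp: L2_def)
  show "(\<lambda>p. cnj (f p) * g p) \<in> borel_measurable torus" by measurable
  have "cmod (cnj a * b) \<le> (cmod a)\<^sup>2 + (cmod b)\<^sup>2" for a b :: complex
  proof -
    have "2 * (cmod a * cmod b) \<le> (cmod a)\<^sup>2 + (cmod b)\<^sup>2"
      using sum_squares_ge_zero[of "cmod a - cmod b" 0] by (simp add: power2_eq_square algebra_simps)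
    moreover have "0 \<le> cmod a * cmod b" by simp
    ultimately show ?thesis unfolding norm_mult complex_mod_cnj by linarith
  qed
  then show "AE p in torus. norm (cnj (f p) * g p) \<le> norm ((cmod (f p))\<^sup>2 + (cmod (g p))\<^sup>2)"
    by (intro AE_I2) simp
qed

lemma L2_integrable: "L2 g \<Longrightarrow> integrable torus g"
  using integrable_cnj_mult[OF L2_const[of 1]] by simp

lemma l2inner_add_right:
  assumes "L2 f" and "L2 g" and "L2 h"
  shows "l2inner f (\<lambda>p. g p + h p) = l2inner f g + l2inner f h"
  using integrable_cnj_mult[OF assms(1,2)] integrable_cnj_mult[OF assms(1,3)]
  by (simp add: l2inner_torus distrib_left)

lemma l2inner_mult_right: "l2inner f (\<lambda>p. c * g p) = c * l2inner f g"
  by (simp add: l2inner_torus mult.left_commute)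

lemma l2inner_lincomb_right:
  assumes "L2 f" and "L2 g" and "L2 h"
  shows "l2inner f (\<lambda>p. g p - t * h p) = l2inner f g - t * l2inner f h"
  using l2inner_add_right[OF assms(1,2) L2_scale[OF assms(3)], of "- t"] l2inner_mult_right[of f "- t" h]
  by simp

lemma l2inner_commute: "l2inner g f = cnj (l2inner f g)"
proof -
  have "integral\<^sup>L torus (\<lambda>p. cnj (g p) * f p) = integral\<^sup>L torus (\<lambda>p. cnj (cnj (f p) * g p))"
    by (rule Bochner_Integration.integral_cong) auto
  also have "\<dots> = cnj (integral\<^sup>L torus (\<lambda>p. cnj (f p) * g p))"
    by (rule Bochner_Integration.integral_cnj)
  finally show ?thesis by (simp add: l2inner_torus)
qed

lemma l2inner_self: "l2inner g g = of_real (haar_weight * integral\<^sup>L torus (\<lambda>p. (cmod (g p))\<^sup>2))"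
proof -
  have "(\<lambda>p. cnj (g p) * g p) = (\<lambda>p. of_real ((cmod (g p))\<^sup>2))"
    by (rule ext) (metis complex_norm_square mult.commute)
  then show ?thesis
    unfolding l2inner_torus by (simp only: integral_complex_of_real of_real_mult)
qed

lemma l2inner_real_mult_self:
  "l2inner g (\<lambda>p. of_real (m p) * g p) = of_real (haar_weight * integral\<^sup>L torus (\<lambda>p. m p * (cmod (g p))\<^sup>2))"
proof -
  have "(\<lambda>p. cnj (g p) * (of_real (m p) * g p)) = (\<lambda>p. of_real (m p * (cmod (g p))\<^sup>2))"
    by (rule ext) (metis complex_norm_square mult.commute mult.left_commute of_real_mult)
  then have "integral\<^sup>L torus (\<lambda>p. cnj (g p) * (of_real (m p) * g p))
      = of_real (integral\<^sup>L torus (\<lambda>p. m p * (cmod (g p))\<^sup>2))"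
    by (simp only: integral_complex_of_real)
  then show ?thesis by (simp add: l2inner_torus)
qed

lemma l2inner_real_mult_hermitian:
  "l2inner f (\<lambda>p. of_real (m p) * g p) = cnj (l2inner g (\<lambda>p. of_real (m p) * f p))"
proof -
  have "integral\<^sup>L torus (\<lambda>p. cnj (f p) * (of_real (m p) * g p))
      = integral\<^sup>L torus (\<lambda>p. cnj (cnj (g p) * (of_real (m p) * f p)))"
    by (rule Bochner_Integration.integral_cong) (auto simp: mult.commute mult.left_commute)
  also have "\<dots> = cnj (integral\<^sup>L torus (\<lambda>p. cnj (g p) * (of_real (m p) * f p)))"
    by (rule Bochner_Integration.integral_cnj)
  finally show ?thesis by (simp add: l2inner_torus)
qed

lemma Re_l2inner_self_nonneg: "0 \<le> Re (l2inner g g)"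
  by (simp add: l2inner_self haar_weight_pos less_imp_le integral_nonneg_AE)

lemma l2inner_cong_AE:
  assumes "AE p in torus. g p = h p" and "L2 f" and "L2 g" and "L2 h"
  shows "l2inner f g = l2inner f h"
proof -
  have [measurable]: "f \<in> borel_measurable torus" "g \<in> borel_measurable torus"
    "h \<in> borel_measurable torus"
    using assms by (auto simp: L2_def)
  show ?thesis
    unfolding l2inner_torus using assms(1)
    by (intro arg_cong[where f="\<lambda>x. _ * x"] integral_cong_AE) auto
qed

lemma l2inner_cong_AE_left:
  assumes "AE p in torus. f p = g p" and "L2 f" and "L2 g" and "L2 h"
  shows "l2inner f h = l2inner g h"
  using l2inner_cong_AE[OF assms(1) assms(4,2,3)] by (metis l2inner_commute)

lemma AE_zero_if_l2inner_self_zero: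
  assumes "L2 g" and "Re (l2inner g g) = 0"
  shows "AE p in torus. g p = 0"
proof -
  have "integral\<^sup>L torus (\<lambda>p. (cmod (g p))\<^sup>2) = 0"
    using assms(2) haar_weight_pos by (simp add: l2inner_self)
  then have "AE p in torus. (cmod (g p))\<^sup>2 = 0"
    using assms(1) by (subst integral_nonneg_eq_0_iff_AE[symmetric]) (auto simp: L2_def)
  then show ?thesis by simp
qed

lemma Cauchy_Schwarz_from_quadratic:
  fixes a c :: real and b :: complex
  assumes quad: "\<And>t. 0 \<le> a - 2 * Re (t * b) + (cmod t)\<^sup>2 * c" and "0 \<le> c"
  shows "(cmod b)\<^sup>2 \<le> a * c"
proof (cases "c = 0")
  case True
  have "b = 0"
  proof (rule ccontr)
    assume "b \<noteq> 0"
    define s where "s = (\<bar>a\<bar> + 1) / (cmod b)\<^sup>2"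
    have "Re (of_real s * cnj b * b) = s * (cmod b)\<^sup>2"
      by (simp only: mult.assoc complex_norm_square[symmetric] mult.commute[of "cnj b"]
          Re_complex_of_real of_real_mult[symmetric])
    also have "\<dots> = \<bar>a\<bar> + 1" using \<open>b \<noteq> 0\<close> by (simp add: s_def)
    finally show False using quad[of "of_real s * cnj b"] True by simp
  qed
  then show ?thesis using True by simp
next
  case False
  then have c: "c > 0" using assms(2) by simp
  define t where "t = cnj b / of_real c"
  have "Re (t * b) = (cmod b)\<^sup>2 / c"
    unfolding t_def using cmod_power2[of b] by (simp add: power2_eq_square)
  moreover have "(cmod t)\<^sup>2 = (cmod b)\<^sup>2 / c\<^sup>2"
    unfolding t_def by (simp add: norm_divide power_divide)
  ultimately have "0 \<le> a - 2 * ((cmod b)\<^sup>2 / c) + (cmod b)\<^sup>2 / c\<^sup>2 * c"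
    using quad[of t] by simp
  also have "\<dots> = a - (cmod b)\<^sup>2 / c" using c by (simp add: power2_eq_square field_simps)
  finally show ?thesis using c by (simp add: field_simps)
qed

lemma hermitian_form_Cauchy_Schwarz:
  fixes F :: "('a \<Rightarrow> complex) \<Rightarrow> ('a \<Rightarrow> complex) \<Rightarrow> complex" and V :: "('a \<Rightarrow> complex) set"
  assumes closed: "\<And>x y t. x \<in> V \<Longrightarrow> y \<in> V \<Longrightarrow> (\<lambda>p. x p - t * y p) \<in> V"
    and lin: "\<And>x y z t. x \<in> V \<Longrightarrow> y \<in> V \<Longrightarrow> z \<in> V \<Longrightarrow> F z (\<lambda>p. x p - t * y p) = F z x - t * F z y"
    and herm: "\<And>x y. x \<in> V \<Longrightarrow> y \<in> V \<Longrightarrow> F y x = cnj (F x y)"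
    and pos: "\<And>x. x \<in> V \<Longrightarrow> 0 \<le> Re (F x x)"
    and x: "x \<in> V" and y: "y \<in> V"
  shows "(cmod (F x y))\<^sup>2 \<le> Re (F x x) * Re (F y y)"
proof (rule Cauchy_Schwarz_from_quadratic)
  show "0 \<le> Re (F y y)" by (rule pos[OF y])
  fix t
  define z where "z = (\<lambda>p. x p - t * y p)"
  have z: "z \<in> V" unfolding z_def by (rule closed[OF x y])
  have "F z z = F z x - t * F z y" using lin[OF x y z, of t] by (simp only: z_def[symmetric])
  also have "F z x = cnj (F x x - t * F x y)"
    using herm[OF x z] lin[OF x y x] by (simp add: z_def)
  also have "F z y = cnj (cnj (F x y) - t * F y y)"
    using herm[OF y z] lin[OF x y y] herm[OF x y] by (simp add: z_def)
  finally have "F z z = cnj (F x x) - cnj t * cnj (F x y) - t * F x y + (t * cnj t) * cnj (F y y)"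
    by (simp add: algebra_simps)
  then have "Re (F z z) = Re (F x x) - 2 * Re (t * F x y) + (cmod t)\<^sup>2 * Re (F y y)"
    by (simp add: complex_norm_square[symmetric])
  then show "0 \<le> Re (F x x) - 2 * Re (t * F x y) + (cmod t)\<^sup>2 * Re (F y y)"
    using pos[OF z] by simp
qed

lemma L2_operator_Cauchy_Schwarz:
  assumes L2_A: "\<And>g. L2 g \<Longrightarrow> L2 (A g)"
    and lin: "\<And>g h t. L2 g \<Longrightarrow> L2 h \<Longrightarrow> A (\<lambda>p. g p - t * h p) = (\<lambda>p. A g p - t * A h p)"
    and herm: "\<And>f g. L2 f \<Longrightarrow> L2 g \<Longrightarrow> l2inner g (A f) = cnj (l2inner f (A g))"
    and pos: "\<And>g. L2 g \<Longrightarrow> 0 \<le> Re (l2inner g (A g))"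
    and f: "L2 f" and g: "L2 g"
  shows "(cmod (l2inner f (A g)))\<^sup>2 \<le> Re (l2inner f (A f)) * Re (l2inner g (A g))"
proof (rule hermitian_form_Cauchy_Schwarz[where V = "Collect L2" and F = "\<lambda>f g. l2inner f (A g)"])
  show "(\<lambda>p. x p - t * y p) \<in> Collect L2" if "x \<in> Collect L2" "y \<in> Collect L2" for x y t
    using that by (simp add: L2_lincomb)
  show "l2inner z (A (\<lambda>p. x p - t * y p)) = l2inner z (A x) - t * l2inner z (A y)"
    if "x \<in> Collect L2" "y \<in> Collect L2" "z \<in> Collect L2" for x y z t
    using that by (simp add: lin l2inner_lincomb_right L2_A)
  show "l2inner y (A x) = cnj (l2inner x (A y))" if "x \<in> Collect L2" "y \<in> Collect L2" for x y
    using that by (intro herm) simp_all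
qed (use f g pos in simp_all)

lemma l2inner_Cauchy_Schwarz:
  assumes "L2 f" and "L2 g"
  shows "(cmod (l2inner f g))\<^sup>2 \<le> Re (l2inner f f) * Re (l2inner g g)"
  using L2_operator_Cauchy_Schwarz[where A = "\<lambda>g. g", OF _ _ l2inner_commute Re_l2inner_self_nonneg assms]
  by simp

definition l2norm :: "(real \<times> real \<Rightarrow> complex) \<Rightarrow> real" where
  "l2norm g = sqrt (Re (l2inner g g))"

lemma l2norm_nonneg: "0 \<le> l2norm g"
  by (simp add: l2norm_def Re_l2inner_self_nonneg)

lemma l2norm_power2: "(l2norm g)\<^sup>2 = Re (l2inner g g)"
  by (simp add: l2norm_def Re_l2inner_self_nonneg)

lemma norm_l2inner_le:
  assumes "L2 f" and "L2 g"
  shows "cmod (l2inner f g) \<le> l2norm f * l2norm g"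
proof (rule power2_le_imp_le)
  show "(cmod (l2inner f g))\<^sup>2 \<le> (l2norm f * l2norm g)\<^sup>2"
    using l2inner_Cauchy_Schwarz[OF assms] by (simp add: l2norm_power2 power_mult_distrib)
  show "0 \<le> l2norm f * l2norm g"
    by (simp add: l2norm_nonneg)
qed

definition l1norm :: "(real \<times> real \<Rightarrow> complex) \<Rightarrow> real" where
  "l1norm g = haar_weight * integral\<^sup>L torus (\<lambda>p. cmod (g p))"

lemma continuous_on_ehat: "continuous_on UNIV (ehat x)"
  unfolding ehat_def[abs_def] dotp_def by (intro continuous_intros)

lemma borel_measurable_ehat [measurable]: "ehat x \<in> borel_measurable torus"
  using borel_measurable_continuous_onI[OF continuous_on_ehat]
  by (intro borel_measurable_torusI) simp

lemma norm_ehat [simp]: "cmod (ehat x p) = 1"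
  by (simp add: ehat_def norm_exp_i_times)

lemma ehat_0 [simp]: "ehat (0, 0) p = 1"
  by (simp add: ehat_def dotp_def)

lemma L2_ehat: "L2 (ehat x)"
  by (rule L2_bounded[of _ 1]) auto

lemma l2inner_ehat_self: "l2inner (ehat x) (ehat x) = 1"
  by (simp add: l2inner_self haar_weight_measure_torus)

lemma l2norm_ehat: "l2norm (ehat x) = 1"
  by (simp add: l2norm_def l2inner_ehat_self)

lemma norm_l2inner_ehat_le_l2norm: "L2 g \<Longrightarrow> cmod (l2inner (ehat x) g) \<le> l2norm g"
  using norm_l2inner_le[OF L2_ehat, of g x] by (simp add: l2norm_ehat)

lemma norm_l2inner_ehat_le_l1norm: "cmod (l2inner (ehat x) g) \<le> l1norm g"
proof -
  have "cmod (l2inner (ehat x) g) = haar_weight * cmod (integral\<^sup>L torus (\<lambda>p. cnj (ehat x p) * g p))"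
    using haar_weight_pos by (simp add: l2inner_torus norm_mult)
  also have "\<dots> \<le> haar_weight * integral\<^sup>L torus (\<lambda>p. cmod (cnj (ehat x p) * g p))"
    using haar_weight_pos by (intro mult_left_mono integral_norm_bound) simp
  also have "\<dots> = l1norm g" by (simp add: l1norm_def norm_mult)
  finally show ?thesis .
qed

lemma l1norm_le_l2norm:
  assumes "L2 g"
  shows "l1norm g \<le> l2norm g"
proof -
  have "l2inner (ehat (0, 0)) (\<lambda>p. of_real (cmod (g p))) = of_real (l1norm g)"
    by (simp add: l2inner_torus l1norm_def)
  moreover have "l2norm (\<lambda>p. complex_of_real (cmod (g p))) = l2norm g"
    by (simp add: l2norm_def l2inner_self)
  ultimately have "cmod (of_real (l1norm g)) \<le> l2norm g"
    using norm_l2inner_ehat_le_l2norm[OF L2_norm[OF assms], of "(0, 0)"] by simp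
  then show ?thesis by simp
qed

section \<open>The operator \<open>\<Sum>\<^sub>x u(x) P\<^sub>x\<close>\<close>

definition proj_sum :: "(int \<times> int \<Rightarrow> real) \<Rightarrow> (real \<times> real \<Rightarrow> complex) \<Rightarrow> real \<times> real \<Rightarrow> complex" where
  "proj_sum u g p = (\<Sum>\<^sub>\<infinity>x. of_real (u x) * l2inner (ehat x) g * ehat x p)"

locale summable_weights =
  fixes u :: "int \<times> int \<Rightarrow> real"
  assumes u_nonneg: "\<And>x. 0 \<le> u x" and u_summable: "u summable_on UNIV"
begin

definition total_weight :: real where
  "total_weight = infsum u UNIV"

lemma total_weight_nonneg: "0 \<le> total_weight"
  unfolding total_weight_def by (rule infsum_nonneg) (simp add: u_nonneg)

lemma infsum_mult_weights: "(\<Sum>\<^sub>\<infinity>x. u x * C) = total_weight * C"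
  unfolding total_weight_def by (rule infsum_cmult_left) (simp add: u_summable)

lemma norm_summable_weights: "norm_summable (\<lambda>x. complex_of_real (u x))"
  using u_summable u_nonneg by simp

lemma norm_summable_proj_coeffs: "norm_summable (\<lambda>x. of_real (u x) * l2inner (ehat x) g)"
  by (rule norm_summable_mult_bounded[OF norm_summable_weights norm_l2inner_ehat_le_l1norm])

lemma summable_on_proj_sum_terms: "(\<lambda>x. of_real (u x) * l2inner (ehat x) g * ehat x p) summable_on UNIV"
  by (rule abs_summable_summable[OF norm_summable_mult_bounded[OF norm_summable_proj_coeffs,
        of "\<lambda>x. ehat x p" 1]]) simp

lemma borel_measurable_proj_sum: "proj_sum u g \<in> borel_measurable torus"
  unfolding proj_sum_def[abs_def]
  by (rule borel_measurable_infsum_bounded[OF norm_summable_proj_coeffs borel_measurable_ehat]) simp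

lemma norm_proj_sum_le: "cmod (proj_sum u g p) \<le> total_weight * l1norm g"
proof -
  have "cmod (proj_sum u g p) \<le> (\<Sum>\<^sub>\<infinity>x. cmod (of_real (u x) * l2inner (ehat x) g))"
    unfolding proj_sum_def by (rule norm_infsum_bounded_le[OF norm_summable_proj_coeffs]) simp
  also have "\<dots> \<le> (\<Sum>\<^sub>\<infinity>x. u x * l1norm g)"
    using norm_l2inner_ehat_le_l1norm u_nonneg
    by (intro infsum_mono[OF norm_summable_proj_coeffs summable_on_cmult_left[OF u_summable]])
       (simp add: norm_mult mult_left_mono)
  finally show ?thesis by (simp add: infsum_mult_weights)
qed

lemma L2_proj_sum: "L2 (proj_sum u g)"
  by (rule L2_bounded[OF borel_measurable_proj_sum norm_proj_sum_le])

lemma proj_sum_lincomb: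
  assumes "L2 g" and "L2 h"
  shows "proj_sum u (\<lambda>p. g p - t * h p) p = proj_sum u g p - t * proj_sum u h p"
proof -
  have "proj_sum u (\<lambda>p. g p - t * h p) p =
    (\<Sum>\<^sub>\<infinity>x. of_real (u x) * l2inner (ehat x) g * ehat x p
            + (- t) * (of_real (u x) * l2inner (ehat x) h * ehat x p))"
    unfolding proj_sum_def
    by (rule infsum_cong) (simp add: l2inner_lincomb_right[OF L2_ehat assms] algebra_simps)
  also have "\<dots> = proj_sum u g p + (\<Sum>\<^sub>\<infinity>x. (- t) * (of_real (u x) * l2inner (ehat x) h * ehat x p))"
    unfolding proj_sum_def
    by (rule infsum_add[OF summable_on_proj_sum_terms summable_on_cmult_right[OF summable_on_proj_sum_terms]])
  also have "(\<Sum>\<^sub>\<infinity>x. (- t) * (of_real (u x) * l2inner (ehat x) h * ehat x p)) = (- t) * proj_sum u h p"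
    unfolding proj_sum_def by (rule infsum_cmult_right[OF summable_on_proj_sum_terms])
  finally show ?thesis by simp
qed

lemma l2inner_proj_sum:
  assumes "L2 f"
  shows "l2inner f (proj_sum u g) = (\<Sum>\<^sub>\<infinity>x. of_real (u x) * l2inner (ehat x) g * l2inner f (ehat x))"
proof -
  have F: "integrable torus (\<lambda>p. cnj (f p))"
    using integrable_cnj_mult[OF assms L2_const[of 1]] by simp
  note swap = integral_mult_infsum[OF norm_summable_proj_coeffs borel_measurable_ehat _ F]
  have "l2inner f (proj_sum u g) = haar_weight * integral\<^sup>L torus (\<lambda>p. cnj (f p) * proj_sum u g p)"
    by (rule l2inner_torus)
  also have "integral\<^sup>L torus (\<lambda>p. cnj (f p) * proj_sum u g p)
      = (\<Sum>\<^sub>\<infinity>x. of_real (u x) * l2inner (ehat x) g * integral\<^sup>L torus (\<lambda>p. cnj (f p) * ehat x p))"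
    unfolding proj_sum_def by (rule swap(2)) simp
  also have "haar_weight * \<dots> = (\<Sum>\<^sub>\<infinity>x. haar_weight * (of_real (u x) * l2inner (ehat x) g * integral\<^sup>L torus (\<lambda>p. cnj (f p) * ehat x p)))"
    by (rule infsum_cmult_right[symmetric]) (rule abs_summable_summable[OF swap(1)], simp)
  also have "\<dots> = (\<Sum>\<^sub>\<infinity>x. of_real (u x) * l2inner (ehat x) g * l2inner f (ehat x))"
    by (rule infsum_cong) (simp add: l2inner_torus)
  finally show ?thesis .
qed

lemma proj_sum_hermitian:
  assumes "L2 f" and "L2 g"
  shows "l2inner f (proj_sum u g) = cnj (l2inner g (proj_sum u f))"
proof -
  have "cnj (l2inner g (proj_sum u f)) = (\<Sum>\<^sub>\<infinity>x. cnj (of_real (u x) * l2inner (ehat x) f * l2inner g (ehat x)))"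
    unfolding l2inner_proj_sum[OF assms(2)] by (rule infsum_cnj[symmetric])
  also have "\<dots> = l2inner f (proj_sum u g)"
    unfolding l2inner_proj_sum[OF assms(1)]
    by (rule infsum_cong) (simp add: l2inner_commute[of "ehat _" f] l2inner_commute[of g "ehat _"])
  finally show ?thesis by simp
qed

lemma l2inner_proj_sum_self:
  assumes "L2 g"
  shows "l2inner g (proj_sum u g) = of_real (\<Sum>\<^sub>\<infinity>x. u x * (cmod (l2inner (ehat x) g))\<^sup>2)"
    and "0 \<le> Re (l2inner g (proj_sum u g))"
    and "Re (l2inner g (proj_sum u g)) \<le> total_weight * (l2norm g)\<^sup>2"
proof -
  define w where "w x = u x * (cmod (l2inner (ehat x) g))\<^sup>2" for x
  have w_le: "w x \<le> u x * (l2norm g)\<^sup>2" for x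
    unfolding w_def using norm_l2inner_ehat_le_l2norm[OF assms, of x] u_nonneg[of x]
    by (intro mult_left_mono power_mono) auto
  have w_nonneg: "0 \<le> w x" for x
    unfolding w_def by (simp add: u_nonneg)
  have w_summable: "w summable_on UNIV"
    by (rule summable_on_comparison_test[OF summable_on_cmult_left[OF u_summable] w_le w_nonneg])
  have "l2inner g (proj_sum u g) = (\<Sum>\<^sub>\<infinity>x. of_real (w x))"
    unfolding l2inner_proj_sum[OF assms]
  proof (rule infsum_cong)
    fix x
    have "l2inner (ehat x) g * l2inner g (ehat x) = of_real ((cmod (l2inner (ehat x) g))\<^sup>2)"
      unfolding l2inner_commute[of g "ehat x"] by (rule complex_norm_square[symmetric])
    then show "of_real (u x) * l2inner (ehat x) g * l2inner g (ehat x) = of_real (w x)"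
      unfolding w_def by (simp add: mult.assoc)
  qed
  also have "\<dots> = of_real (infsum w UNIV)"
    by (rule infsumI) (rule has_sum_of_real[OF has_sum_infsum[OF w_summable]])
  finally have eq: "l2inner g (proj_sum u g) = of_real (infsum w UNIV)" .
  then show "l2inner g (proj_sum u g) = of_real (\<Sum>\<^sub>\<infinity>x. u x * (cmod (l2inner (ehat x) g))\<^sup>2)"
    unfolding w_def[abs_def] .
  show "0 \<le> Re (l2inner g (proj_sum u g))"
    unfolding eq by (simp add: infsum_nonneg w_nonneg)
  have "infsum w UNIV \<le> total_weight * (l2norm g)\<^sup>2"
    using infsum_mono[OF w_summable summable_on_cmult_left[OF u_summable] w_le]
    by (simp add: infsum_mult_weights)
  then show "Re (l2inner g (proj_sum u g)) \<le> total_weight * (l2norm g)\<^sup>2"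
    unfolding eq by simp
qed

end

section \<open>Coercive operators \<open>M\<^sub>m + \<Sum>\<^sub>x u(x) P\<^sub>x\<close>\<close>

locale coercive_multiplier = summable_weights u for u +
  fixes m :: "real \<times> real \<Rightarrow> real" and lo hi :: real
  assumes m_measurable [measurable]: "m \<in> borel_measurable torus"
    and lo_pos: "0 < lo" and m_ge: "\<And>p. lo \<le> m p" and m_le: "\<And>p. m p \<le> hi"
begin

definition Bop :: "(real \<times> real \<Rightarrow> complex) \<Rightarrow> real \<times> real \<Rightarrow> complex" where
  "Bop g p = of_real (m p) * g p + proj_sum u g p"

definition Bform :: "(real \<times> real \<Rightarrow> complex) \<Rightarrow> (real \<times> real \<Rightarrow> complex) \<Rightarrow> complex" where
  "Bform f g = l2inner f (Bop g)"

lemma L2_Bop: "L2 g \<Longrightarrow> L2 (Bop g)"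
proof -
  assume g: "L2 g"
  have "L2 (\<lambda>p. of_real (m p) * g p)"
  proof (rule L2_mult_bounded[OF g])
    show "cmod (complex_of_real (m p)) \<le> hi" for p
      using m_ge[of p] m_le[of p] lo_pos by simp
  qed measurable
  then show "L2 (Bop g)"
    unfolding Bop_def[abs_def] by (rule L2_add[OF _ L2_proj_sum])
qed

lemma Bop_lincomb:
  assumes "L2 g" and "L2 h"
  shows "Bop (\<lambda>p. g p - t * h p) = (\<lambda>p. Bop g p - t * Bop h p)"
  by (rule ext) (simp add: Bop_def proj_sum_lincomb[OF assms] algebra_simps)

lemma Bform_split:
  assumes "L2 f" and "L2 g"
  shows "Bform f g = l2inner f (\<lambda>p. of_real (m p) * g p) + l2inner f (proj_sum u g)"
proof -
  have "L2 (\<lambda>p. of_real (m p) * g p)"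
    using L2_Bop[OF assms(2)] L2_lincomb[OF L2_Bop[OF assms(2)] L2_proj_sum, of 1 g]
    by (simp add: Bop_def)
  then show ?thesis
    unfolding Bform_def Bop_def[abs_def] by (rule l2inner_add_right[OF assms(1) _ L2_proj_sum])
qed

lemma Bform_hermitian:
  assumes "L2 f" and "L2 g"
  shows "Bform g f = cnj (Bform f g)"
  unfolding Bform_split[OF assms] Bform_split[OF assms(2,1)]
  using l2inner_real_mult_hermitian[of g m f] proj_sum_hermitian[OF assms(2,1)] by simp

lemma Bform_self_bounds:
  assumes "L2 g"
  shows "lo * (l2norm g)\<^sup>2 \<le> Re (Bform g g)" and "Re (Bform g g) \<le> (hi + total_weight) * (l2norm g)\<^sup>2"
proof -
  have [measurable]: "g \<in> borel_measurable torus" using assms by (simp add: L2_def)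
  have g2: "integrable torus (\<lambda>p. (cmod (g p))\<^sup>2)" using assms by (simp add: L2_def)
  have mg2: "integrable torus (\<lambda>p. m p * (cmod (g p))\<^sup>2)"
  proof (rule Bochner_Integration.integrable_bound[OF integrable_mult_right[OF g2, of hi]])
    show "AE p in torus. norm (m p * (cmod (g p))\<^sup>2) \<le> norm (hi * (cmod (g p))\<^sup>2)"
    proof (rule AE_I2)
      fix p
      have "\<bar>m p\<bar> \<le> \<bar>hi\<bar>" using m_ge[of p] m_le[of p] lo_pos by linarith
      then show "norm (m p * (cmod (g p))\<^sup>2) \<le> norm (hi * (cmod (g p))\<^sup>2)"
        by (simp add: abs_mult mult_right_mono)
    qed
  qed measurable
  have norm2: "(l2norm g)\<^sup>2 = haar_weight * integral\<^sup>L torus (\<lambda>p. (cmod (g p))\<^sup>2)"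
    by (simp add: l2norm_power2 l2inner_self)
  have Re_Bform: "Re (Bform g g)
      = haar_weight * integral\<^sup>L torus (\<lambda>p. m p * (cmod (g p))\<^sup>2) + Re (l2inner g (proj_sum u g))"
    unfolding Bform_split[OF assms assms] l2inner_real_mult_self by simp
  have "lo * integral\<^sup>L torus (\<lambda>p. (cmod (g p))\<^sup>2) \<le> integral\<^sup>L torus (\<lambda>p. m p * (cmod (g p))\<^sup>2)"
    using integral_mono[OF integrable_mult_right[OF g2, of lo] mg2] m_ge by (simp add: mult_right_mono)
  then have "haar_weight * (lo * integral\<^sup>L torus (\<lambda>p. (cmod (g p))\<^sup>2))
      \<le> haar_weight * integral\<^sup>L torus (\<lambda>p. m p * (cmod (g p))\<^sup>2)"
    using haar_weight_pos by (intro mult_left_mono) auto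
  then show "lo * (l2norm g)\<^sup>2 \<le> Re (Bform g g)"
    unfolding Re_Bform norm2 using l2inner_proj_sum_self(2)[OF assms] by (simp add: algebra_simps)
  have "integral\<^sup>L torus (\<lambda>p. m p * (cmod (g p))\<^sup>2) \<le> hi * integral\<^sup>L torus (\<lambda>p. (cmod (g p))\<^sup>2)"
    using integral_mono[OF mg2 integrable_mult_right[OF g2, of hi]] m_le by (simp add: mult_right_mono)
  then have "haar_weight * integral\<^sup>L torus (\<lambda>p. m p * (cmod (g p))\<^sup>2)
      \<le> haar_weight * (hi * integral\<^sup>L torus (\<lambda>p. (cmod (g p))\<^sup>2))"
    using haar_weight_pos by (intro mult_left_mono) auto
  then show "Re (Bform g g) \<le> (hi + total_weight) * (l2norm g)\<^sup>2"
    unfolding Re_Bform using l2inner_proj_sum_self(3)[OF assms] by (simp add: algebra_simps norm2)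
qed

lemma Bform_self_real:
  assumes "L2 g"
  shows "Bform g g = of_real (Re (Bform g g))"
proof -
  have "Im (Bform g g) = 0"
    using Bform_hermitian[OF assms assms] by (metis Im_complex_of_real Reals_cnj_iff complex_is_Real_iff)
  then show ?thesis by (simp add: complex_eq_iff)
qed

lemma Re_Bform_self_nonneg: "L2 g \<Longrightarrow> 0 \<le> Re (Bform g g)"
  using order_trans[OF _ Bform_self_bounds(1)] lo_pos by simp

lemma Bform_Cauchy_Schwarz:
  assumes "L2 f" and "L2 g"
  shows "(cmod (Bform f g))\<^sup>2 \<le> Re (Bform f f) * Re (Bform g g)"
  using L2_operator_Cauchy_Schwarz[OF L2_Bop Bop_lincomb Bform_hermitian[unfolded Bform_def]
      Re_Bform_self_nonneg[unfolded Bform_def] assms]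
  unfolding Bform_def .

definition shift :: real where
  "shift = hi + total_weight + 1"

definition rate :: real where
  "rate = 1 - lo / shift"

definition contr :: "(real \<times> real \<Rightarrow> complex) \<Rightarrow> real \<times> real \<Rightarrow> complex" where
  "contr g p = g p - of_real (1 / shift) * Bop g p"

lemma lo_le_hi: "lo \<le> hi"
  using m_ge[of 0] m_le[of 0] by simp

lemma shift_pos: "0 < shift"
  unfolding shift_def using lo_le_hi lo_pos total_weight_nonneg by simp

lemma rate_nonneg: "0 \<le> rate"
  unfolding rate_def shift_def using lo_le_hi total_weight_nonneg shift_pos
  by (simp add: shift_def field_simps)

lemma rate_less_1: "rate < 1"
  unfolding rate_def using shift_pos lo_pos by simp

lemma L2_contr: "L2 g \<Longrightarrow> L2 (contr g)"
  unfolding contr_def[abs_def] by (rule L2_lincomb[OF _ L2_Bop])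

lemma contr_lincomb:
  assumes "L2 g" and "L2 h"
  shows "contr (\<lambda>p. g p - t * h p) = (\<lambda>p. contr g p - t * contr h p)"
  by (rule ext) (simp add: contr_def Bop_lincomb[OF assms] algebra_simps)

lemma l2inner_contr:
  assumes "L2 f" and "L2 g"
  shows "l2inner f (contr g) = l2inner f g - of_real (1 / shift) * Bform f g"
  unfolding contr_def[abs_def] Bform_def
  by (rule l2inner_lincomb_right[OF assms L2_Bop[OF assms(2)]])

lemma contr_hermitian:
  assumes "L2 f" and "L2 g"
  shows "l2inner g (contr f) = cnj (l2inner f (contr g))"
  unfolding l2inner_contr[OF assms] l2inner_contr[OF assms(2,1)]
  using Bform_hermitian[OF assms] l2inner_commute[of g f] by simp

lemma Re_l2inner_contr_self:
  "L2 g \<Longrightarrow> Re (l2inner g (contr g)) = (l2norm g)\<^sup>2 - Re (Bform g g) / shift"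
  by (simp add: l2inner_contr l2norm_power2)

lemma Re_l2inner_contr_self_nonneg:
  assumes "L2 g"
  shows "0 \<le> Re (l2inner g (contr g))"
proof -
  have "Re (Bform g g) / shift \<le> (hi + total_weight) * (l2norm g)\<^sup>2 / shift"
    using Bform_self_bounds(2)[OF assms] shift_pos by (simp add: divide_right_mono)
  also have "\<dots> \<le> (l2norm g)\<^sup>2"
    using shift_pos by (simp add: shift_def field_simps)
  finally show ?thesis unfolding Re_l2inner_contr_self[OF assms] by simp
qed

lemma Re_l2inner_contr_self_le:
  assumes "L2 g"
  shows "Re (l2inner g (contr g)) \<le> rate * (l2norm g)\<^sup>2"
proof -
  have "lo * (l2norm g)\<^sup>2 / shift \<le> Re (Bform g g) / shift"
    using Bform_self_bounds(1)[OF assms] shift_pos by (simp add: divide_right_mono)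
  then show ?thesis unfolding Re_l2inner_contr_self[OF assms] rate_def by (simp add: algebra_simps)
qed

text \<open>\<open>contr\<close> is self-adjoint with \<open>0 \<le> contr \<le> rate\<close>, so Cauchy--Schwarz for the form
  \<open>\<langle>f, contr g\<rangle>\<close> gives \<open>\<parallel>contr g\<parallel>\<^sup>4 \<le> \<langle>g, contr g\<rangle> \<langle>contr g, contr (contr g)\<rangle> \<le>
  rate\<^sup>2 \<parallel>g\<parallel>\<^sup>2 \<parallel>contr g\<parallel>\<^sup>2\<close>.\<close>
lemma l2norm_contr_le:
  assumes g: "L2 g"
  shows "l2norm (contr g) \<le> rate * l2norm g"
proof -
  define w where "w = contr g"
  have w: "L2 w" unfolding w_def by (rule L2_contr[OF g])
  have "l2inner w w = cnj (l2inner w (contr g))"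
    unfolding w_def by (rule l2inner_commute)
  also have "\<dots> = l2inner g (contr w)" using contr_hermitian[OF w g] by simp
  finally have w_norm: "(l2norm w)\<^sup>2 = Re (l2inner g (contr w))" by (simp add: l2norm_power2)
  have "0 \<le> Re (l2inner g (contr w))"
    unfolding w_norm[symmetric] by simp
  then have "((l2norm w)\<^sup>2)\<^sup>2 \<le> (cmod (l2inner g (contr w)))\<^sup>2"
    unfolding w_norm by (intro power_mono complex_Re_le_cmod)
  also have "\<dots> \<le> Re (l2inner g (contr g)) * Re (l2inner w (contr w))"
    by (rule L2_operator_Cauchy_Schwarz[OF L2_contr contr_lincomb contr_hermitian
          Re_l2inner_contr_self_nonneg g w])
  also have "\<dots> \<le> (rate * (l2norm g)\<^sup>2) * (rate * (l2norm w)\<^sup>2)"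
    using rate_nonneg
    by (intro mult_mono Re_l2inner_contr_self_le Re_l2inner_contr_self_nonneg g w) simp_all
  also have "\<dots> = (rate * l2norm g)\<^sup>2 * (l2norm w)\<^sup>2"
    by algebra
  finally have le: "(l2norm w)\<^sup>2 * (l2norm w)\<^sup>2 \<le> (rate * l2norm g)\<^sup>2 * (l2norm w)\<^sup>2"
    by (simp only: power2_eq_square[of "(l2norm w)\<^sup>2"])
  have "(l2norm w)\<^sup>2 \<le> (rate * l2norm g)\<^sup>2"
  proof (cases "l2norm w = 0")
    case False
    then have "0 < (l2norm w)\<^sup>2" using l2norm_nonneg[of w] by simp
    with le show ?thesis by (rule mult_right_le_imp_le)
  qed simp
  then show ?thesis
    unfolding w_def[symmetric] by (rule power2_le_imp_le) (simp add: rate_nonneg l2norm_nonneg)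
qed

text \<open>\<open>Bop\<^sup>-\<^sup>1 = shift\<^sup>-\<^sup>1 \<Sum>\<^sub>n contr\<^sup>n\<close>.  Without a completeness theorem for
  \<open>L\<^sup>2\<close> at hand, the series is summed pointwise: the bounds \<open>rate\<^sup>n \<parallel>h\<parallel>\<close> on the \<open>L\<^sup>1\<close>
  norms give absolute convergence almost everywhere, and square integrability of the sum
  \<open>g\<close> is recovered from \<open>g = (h - \<Sum>\<^sub>x u(x) P\<^sub>x g) / m\<close>, whose numerator is bounded.\<close>

definition neumann :: "(real \<times> real \<Rightarrow> complex) \<Rightarrow> nat \<Rightarrow> real \<times> real \<Rightarrow> complex" where
  "neumann h n = (contr ^^ n) h"

definition neumann_sum :: "(real \<times> real \<Rightarrow> complex) \<Rightarrow> real \<times> real \<Rightarrow> complex" where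
  "neumann_sum h p = of_real (1 / shift) * (\<Sum>n. neumann h n p)"

lemma neumann_0 [simp]: "neumann h 0 = h"
  by (simp add: neumann_def)

lemma neumann_Suc: "neumann h (Suc n) = contr (neumann h n)"
  by (simp add: neumann_def)

context
  fixes h :: "real \<times> real \<Rightarrow> complex"
  assumes h: "L2 h"
begin

lemma L2_neumann: "L2 (neumann h n)"
  by (induct n) (simp_all add: neumann_Suc L2_contr h)

lemma borel_measurable_neumann [measurable]: "neumann h n \<in> borel_measurable torus"
  by (rule L2_borel_measurable[OF L2_neumann])

lemma l2norm_neumann_le: "l2norm (neumann h n) \<le> rate ^ n * l2norm h"
proof (induct n)
  case (Suc n)
  have "l2norm (neumann h (Suc n)) \<le> rate * l2norm (neumann h n)"
    unfolding neumann_Suc by (rule l2norm_contr_le[OF L2_neumann])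
  also have "\<dots> \<le> rate * (rate ^ n * l2norm h)"
    using Suc rate_nonneg by (rule mult_left_mono)
  finally show ?case by simp
qed simp

lemma summable_neumann_bound: "summable (\<lambda>n. rate ^ n * l2norm h)"
  using rate_nonneg rate_less_1 by (intro summable_mult2 summable_geometric) simp

lemma summable_integral_norm_neumann: "summable (\<lambda>n. integral\<^sup>L torus (\<lambda>p. cmod (neumann h n p)))"
proof (rule summable_comparison_test'[OF summable_divide[OF summable_neumann_bound, of haar_weight]])
  fix n
  have "l1norm (neumann h n) \<le> rate ^ n * l2norm h"
    using l1norm_le_l2norm[OF L2_neumann] l2norm_neumann_le by (rule order_trans)
  then show "norm (integral\<^sup>L torus (\<lambda>p. cmod (neumann h n p))) \<le> rate ^ n * l2norm h / haar_weight"
    using haar_weight_pos by (simp add: l1norm_def integral_nonneg_AE field_simps)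
qed

lemma AE_summable_neumann: "AE p in torus. summable (\<lambda>n. cmod (neumann h n p))"
  by (rule AE_summable_norm[OF L2_integrable[OF L2_neumann] summable_integral_norm_neumann])

lemma borel_measurable_neumann_sum: "neumann_sum h \<in> borel_measurable torus"
  unfolding neumann_sum_def[abs_def] by measurable

lemma l2inner_ehat_neumann_sum:
  "l2inner (ehat x) (neumann_sum h) = (\<Sum>n. of_real (1 / shift) * l2inner (ehat x) (neumann h n))"
proof -
  define c where "c = complex_of_real (1 / shift)"
  define f where "f n p = cnj (ehat x p) * (c * neumann h n p)" for n p
  have f: "integrable torus (f n)" for n
    unfolding f_def by (rule integrable_cnj_mult[OF L2_ehat L2_scale[OF L2_neumann]])
  have norm_f: "norm (f n p) = (1 / shift) * cmod (neumann h n p)" for n p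
    unfolding f_def c_def using shift_pos by (simp add: norm_mult norm_divide)
  have AE_f: "AE p in torus. summable (\<lambda>n. norm (f n p))"
    using AE_summable_neumann by eventually_elim (simp add: norm_f summable_mult)
  have int_f: "summable (\<lambda>n. integral\<^sup>L torus (\<lambda>p. norm (f n p)))"
    unfolding norm_f using summable_mult[OF summable_integral_norm_neumann, of "1 / shift"] by simp
  have "integral\<^sup>L torus (\<lambda>p. cnj (ehat x p) * neumann_sum h p) = integral\<^sup>L torus (\<lambda>p. \<Sum>n. f n p)"
  proof (rule integral_cong_AE)
    show "(\<lambda>p. cnj (ehat x p) * neumann_sum h p) \<in> borel_measurable torus"
      using borel_measurable_neumann_sum by measurable
    show "(\<lambda>p. \<Sum>n. f n p) \<in> borel_measurable torus"
      unfolding f_def by measurable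
    show "AE p in torus. cnj (ehat x p) * neumann_sum h p = (\<Sum>n. f n p)"
      using AE_summable_neumann
    proof eventually_elim
      case (elim p)
      then have "summable (\<lambda>n. neumann h n p)" by (rule summable_norm_cancel)
      then show ?case
        unfolding f_def neumann_sum_def c_def[symmetric]
        by (intro sums_unique sums_mult summable_sums)
    qed
  qed
  also have "\<dots> = (\<Sum>n. integral\<^sup>L torus (f n))"
    by (rule integral_suminf[OF f AE_f int_f])
  finally have "l2inner (ehat x) (neumann_sum h) = haar_weight * (\<Sum>n. integral\<^sup>L torus (f n))"
    by (simp add: l2inner_torus)
  also have "\<dots> = (\<Sum>n. haar_weight * integral\<^sup>L torus (f n))"
    by (rule suminf_mult[OF summable_integral[OF f AE_f int_f], symmetric])
  also have "\<dots> = (\<Sum>n. c * l2inner (ehat x) (neumann h n))"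
  proof (rule suminf_cong)
    fix n
    have "haar_weight * integral\<^sup>L torus (f n) = l2inner (ehat x) (\<lambda>p. c * neumann h n p)"
      by (simp add: l2inner_torus f_def[abs_def])
    then show "haar_weight * integral\<^sup>L torus (f n) = c * l2inner (ehat x) (neumann h n)"
      by (simp add: l2inner_mult_right)
  qed
  finally show ?thesis unfolding c_def .
qed

lemma proj_sum_neumann_sum:
  "(\<lambda>n. of_real (1 / shift) * proj_sum u (neumann h n) p) sums proj_sum u (neumann_sum h) p"
proof -
  define c where "c = complex_of_real (1 / shift)"
  define b where "b n = (1 / shift) * (rate ^ n * l2norm h)" for n
  define F where "F x n = of_real (u x) * (c * l2inner (ehat x) (neumann h n)) * ehat x p" for x n
  have b: "summable b" unfolding b_def by (rule summable_mult[OF summable_neumann_bound])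
  have b_nonneg: "0 \<le> b n" for n
    unfolding b_def using shift_pos rate_nonneg l2norm_nonneg by simp
  have coeff_le: "cmod (c * l2inner (ehat x) (neumann h n)) \<le> b n" for x n
  proof -
    have "cmod (l2inner (ehat x) (neumann h n)) \<le> rate ^ n * l2norm h"
      using norm_l2inner_ehat_le_l2norm[OF L2_neumann] l2norm_neumann_le by (rule order_trans)
    then show ?thesis
      unfolding c_def b_def using shift_pos by (simp add: norm_mult norm_divide divide_right_mono)
  qed
  have F_le: "cmod (F x n) \<le> u x * b n" for x n
    unfolding F_def using coeff_le[of x n] u_nonneg[of x]
    by (simp add: norm_mult abs_of_nonneg mult_left_mono)
  have inner_F: "(\<Sum>\<^sub>\<infinity>x. F x n) = c * proj_sum u (neumann h n) p" for n
  proof -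
    have "(\<Sum>\<^sub>\<infinity>x. F x n) = (\<Sum>\<^sub>\<infinity>x. c * (of_real (u x) * l2inner (ehat x) (neumann h n) * ehat x p))"
      by (rule infsum_cong) (simp add: F_def algebra_simps)
    also have "\<dots> = c * proj_sum u (neumann h n) p"
      unfolding proj_sum_def by (rule infsum_cmult_right[OF summable_on_proj_sum_terms])
    finally show ?thesis .
  qed
  have "proj_sum u (neumann_sum h) p = (\<Sum>\<^sub>\<infinity>x. \<Sum>n. F x n)"
    unfolding proj_sum_def
  proof (rule infsum_cong)
    fix x
    have "summable (\<lambda>n. c * l2inner (ehat x) (neumann h n))"
      by (rule summable_norm_cancel, rule summable_comparison_test'[OF b]) (use coeff_le in auto)
    then have "(\<lambda>n. F x n) sums (of_real (u x) * (\<Sum>n. c * l2inner (ehat x) (neumann h n)) * ehat x p)"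
      unfolding F_def by (intro sums_mult2 sums_mult summable_sums)
    then show "of_real (u x) * l2inner (ehat x) (neumann_sum h) * ehat x p = (\<Sum>n. F x n)"
      unfolding l2inner_ehat_neumann_sum c_def by (simp add: sums_iff)
  qed
  also have "\<dots> = (\<Sum>n. c * proj_sum u (neumann h n) p)"
    unfolding infsum_suminf_swap(2)[OF u_summable u_nonneg b b_nonneg F_le] inner_F ..
  finally have eq: "proj_sum u (neumann_sum h) p = (\<Sum>n. c * proj_sum u (neumann h n) p)" .
  have "summable (\<lambda>n. c * proj_sum u (neumann h n) p)"
    using infsum_suminf_swap(1)[OF u_summable u_nonneg b b_nonneg F_le]
    unfolding inner_F by (rule summable_norm_cancel)
  then show ?thesis
    unfolding c_def[symmetric] eq by (rule summable_sums)
qed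

lemma Bop_neumann_sum: "AE p in torus. Bop (neumann_sum h) p = h p"
  using AE_summable_neumann
proof eventually_elim
  case (elim p)
  define c where "c = complex_of_real (1 / shift)"
  have sm: "summable (\<lambda>n. neumann h n p)" by (rule summable_norm_cancel[OF elim])
  have "(\<lambda>n. neumann h n p - neumann h (Suc n) p) sums h p"
    using telescope_sums'[OF summable_LIMSEQ_zero[OF sm]] by simp
  moreover have "(\<lambda>n. neumann h n p - neumann h (Suc n) p) sums Bop (neumann_sum h) p"
  proof -
    have step: "neumann h n p - neumann h (Suc n) p
        = c * (of_real (m p) * neumann h n p) + c * proj_sum u (neumann h n) p" for n
      unfolding neumann_Suc contr_def Bop_def c_def by (simp add: algebra_simps)
    have "(\<lambda>n. c * (of_real (m p) * neumann h n p)) sums (of_real (m p) * neumann_sum h p)"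
      unfolding neumann_sum_def c_def[symmetric]
      using sums_mult[OF sums_mult[OF summable_sums[OF sm], of "of_real (m p)"], of c]
      by (simp add: mult.left_commute)
    from sums_add[OF this proj_sum_neumann_sum[unfolded c_def[symmetric]]]
    show ?thesis unfolding step by (simp add: Bop_def)
  qed
  ultimately show "Bop (neumann_sum h) p = h p"
    by (simp add: sums_unique2)
qed

lemma L2_neumann_sum: "L2 (neumann_sum h)"
proof -
  define r where "r p = of_real (1 / m p) * (h p - proj_sum u (neumann_sum h) p)" for p
  have r: "L2 r"
    unfolding r_def[abs_def]
  proof (rule L2_mult_bounded[OF L2_lincomb[OF h L2_proj_sum, of 1, simplified]])
    show "cmod (complex_of_real (1 / m p)) \<le> 1 / lo" for p
    proof -
      have "0 < m p" using m_ge[of p] lo_pos by simp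
      moreover have "1 / m p \<le> 1 / lo" using m_ge[of p] lo_pos by (simp add: frac_le)
      ultimately show ?thesis by (simp only: norm_of_real) simp
    qed
  qed measurable
  have "AE p in torus. neumann_sum h p = r p"
    using Bop_neumann_sum
  proof eventually_elim
    case (elim p)
    have "0 < m p" using m_ge[of p] lo_pos by simp
    then show ?case using elim unfolding r_def Bop_def by (auto simp: field_simps)
  qed
  then have "integrable torus (\<lambda>p. (cmod (neumann_sum h p))\<^sup>2) = integrable torus (\<lambda>p. (cmod (r p))\<^sup>2)"
    using borel_measurable_neumann_sum L2_borel_measurable[OF r]
    by (intro integrable_cong_AE) (auto elim: AE_mp)
  then show ?thesis
    using r borel_measurable_neumann_sum unfolding L2_def by simp
qed

end

lemma Bop_solvable: "L2 h \<Longrightarrow> \<exists>g. L2 g \<and> (AE p in torus. Bop g p = h p)"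
  using L2_neumann_sum Bop_neumann_sum by blast

lemma l2inner_Bop_solution:
  assumes "L2 g" and "L2 f" and "AE p in torus. Bop g p = h p" and "L2 h"
  shows "l2inner h f = Bform g f"
proof -
  have "l2inner h f = l2inner (Bop g) f"
    using assms(3) by (intro l2inner_cong_AE_left[OF _ assms(4) L2_Bop[OF assms(1)] assms(2)]) auto
  also have "\<dots> = Bform g f"
    unfolding Bform_def l2inner_commute[of "Bop g"] using Bform_hermitian[OF assms(1,2)]
    by (simp add: Bform_def)
  finally show ?thesis .
qed

lemma Bform_solution_pos:
  assumes "L2 g" and "AE p in torus. Bop g p = ehat (0, 0) p"
  shows "0 < Re (Bform g g)"
proof (rule ccontr)
  assume "\<not> 0 < Re (Bform g g)"
  then have "lo * (l2norm g)\<^sup>2 \<le> 0"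
    using Bform_self_bounds(1)[OF assms(1)] by simp
  then have "Re (l2inner g g) = 0"
    using lo_pos by (simp add: mult_le_0_iff l2norm_power2[symmetric])
  then have "AE p in torus. g p = 0"
    by (rule AE_zero_if_l2inner_self_zero[OF assms(1)])
  then have "l2inner g (Bop (ehat (0, 0))) = l2inner (\<lambda>_. 0) (Bop (ehat (0, 0)))"
    by (rule l2inner_cong_AE_left[OF _ assms(1) L2_const L2_Bop[OF L2_ehat]])
  then have "Bform g (ehat (0, 0)) = 0"
    by (simp add: Bform_def l2inner_torus)
  moreover have "l2inner (ehat (0, 0)) (ehat (0, 0)) = Bform g (ehat (0, 0))"
    by (rule l2inner_Bop_solution[OF assms(1) L2_ehat assms(2) L2_ehat])
  ultimately show False
    by (simp add: l2inner_ehat_self)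
qed

definition Apert :: "real \<Rightarrow> (real \<times> real \<Rightarrow> complex) \<Rightarrow> real \<times> real \<Rightarrow> complex" where
  "Apert U g p = Bop g p + of_real U * l2inner (ehat (0, 0)) g * ehat (0, 0) p"

lemma Apert_0: "Apert 0 = Bop"
  by (intro ext) (simp add: Apert_def)

lemma L2_Apert: "L2 g \<Longrightarrow> L2 (Apert U g)"
  unfolding Apert_def[abs_def] by (rule L2_add[OF L2_Bop L2_scale[OF L2_ehat]])

lemma Apert_lincomb:
  assumes "L2 g" and "L2 h"
  shows "Apert U (\<lambda>p. g p - t * h p) p = Apert U g p - t * Apert U h p"
  unfolding Apert_def Bop_lincomb[OF assms] l2inner_lincomb_right[OF L2_ehat assms]
  by (simp add: algebra_simps)

lemma Apert_coercive:
  assumes "L2 g" and "0 \<le> U"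
  shows "lo * (l2norm g)\<^sup>2 \<le> Re (l2inner g (Apert U g))"
proof -
  define c where "c = of_real U * l2inner (ehat (0, 0)) g"
  have "l2inner g (Apert U g) = Bform g g + l2inner g (\<lambda>p. c * ehat (0, 0) p)"
    unfolding Apert_def[abs_def] c_def[symmetric] Bform_def
    by (rule l2inner_add_right[OF assms(1) L2_Bop[OF assms(1)] L2_scale[OF L2_ehat]])
  also have "l2inner g (\<lambda>p. c * ehat (0, 0) p) = c * l2inner g (ehat (0, 0))"
    by (rule l2inner_mult_right)
  also have "c * l2inner g (ehat (0, 0)) = of_real (U * (cmod (l2inner (ehat (0, 0)) g))\<^sup>2)"
  proof -
    have "l2inner (ehat (0, 0)) g * cnj (l2inner (ehat (0, 0)) g)
        = of_real ((cmod (l2inner (ehat (0, 0)) g))\<^sup>2)"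
      by (rule complex_norm_square[symmetric])
    then show ?thesis
      unfolding c_def l2inner_commute[of g "ehat (0, 0)"] mult.assoc by simp
  qed
  finally have "Re (l2inner g (Apert U g)) = Re (Bform g g) + U * (cmod (l2inner (ehat (0, 0)) g))\<^sup>2"
    by simp
  moreover have "0 \<le> U * (cmod (l2inner (ehat (0, 0)) g))\<^sup>2"
    using assms(2) by simp
  ultimately show ?thesis
    using Bform_self_bounds(1)[OF assms(1)] by linarith
qed

lemma l2inner_Apert_solution_unique:
  assumes U: "0 \<le> U" and f: "L2 f" and g1: "L2 g1" and g2: "L2 g2"
    and "AE p in torus. Apert U g1 p = h p" and "AE p in torus. Apert U g2 p = h p"
  shows "l2inner f g1 = l2inner f g2"
proof -
  define w where "w p = g1 p - 1 * g2 p" for p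
  have w: "L2 w" unfolding w_def[abs_def] by (rule L2_lincomb[OF g1 g2])
  have "AE p in torus. Apert U w p = 0"
    using assms(5,6) unfolding w_def[abs_def] by eventually_elim (simp only: Apert_lincomb[OF g1 g2], simp)
  then have "l2inner w (Apert U w) = l2inner w (\<lambda>_. 0)"
    by (rule l2inner_cong_AE[OF _ w L2_Apert[OF w] L2_const])
  then have "l2inner w (Apert U w) = 0"
    by (simp add: l2inner_torus)
  then have "lo * (l2norm w)\<^sup>2 \<le> 0"
    using Apert_coercive[OF w U] by simp
  then have "Re (l2inner w w) = 0"
    using lo_pos by (simp add: mult_le_0_iff l2norm_power2[symmetric])
  then have "AE p in torus. w p = 0"
    by (rule AE_zero_if_l2inner_self_zero[OF w])
  then have "AE p in torus. g1 p = g2 p"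
    by eventually_elim (simp add: w_def)
  then show ?thesis by (rule l2inner_cong_AE[OF _ f g1 g2])
qed

lemma Apert_rank_one_solution:
  assumes gs: "L2 gs" "AE p in torus. Bop gs p = ehat (0, 0) p"
    and gd: "L2 gd" "AE p in torus. Bop gd p = d p" and U: "0 \<le> U"
  defines "\<beta> \<equiv> of_real U * Bform gs gd / (1 + of_real U * Bform gs gs)"
  shows "AE p in torus. Apert U (\<lambda>p. gd p - \<beta> * gs p) p = d p"
proof -
  have s: "Bform gs gs = of_real (Re (Bform gs gs))" "0 < Re (Bform gs gs)"
    using Bform_self_real[OF gs(1)] Bform_solution_pos[OF gs] by simp_all
  have "1 + of_real U * Bform gs gs = of_real (1 + U * Re (Bform gs gs))"
    by (subst s(1)) simp
  moreover have "0 < 1 + U * Re (Bform gs gs)"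
    using U s(2) by (simp add: add_pos_nonneg)
  ultimately have "1 + of_real U * Bform gs gs \<noteq> 0"
    by (metis of_real_eq_0_iff order_less_irrefl)
  then have \<beta>: "\<beta> * (1 + of_real U * Bform gs gs) = of_real U * Bform gs gd"
    unfolding \<beta>_def by simp
  have e0: "l2inner (ehat (0, 0)) g = Bform gs g" if "L2 g" for g
    by (rule l2inner_Bop_solution[OF gs(1) that gs(2) L2_ehat])
  have coeff: "l2inner (ehat (0, 0)) (\<lambda>p. gd p - \<beta> * gs p) = Bform gs gd - \<beta> * Bform gs gs"
    by (simp add: l2inner_lincomb_right[OF L2_ehat gd(1) gs(1)] e0 gs(1) gd(1))
  from gs(2) gd(2) show ?thesis
  proof eventually_elim
    case (elim p)
    then have "Apert U (\<lambda>p. gd p - \<beta> * gs p) p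
        = d p + (of_real U * Bform gs gd - \<beta> * (1 + of_real U * Bform gs gs))"
      unfolding Apert_def Bop_lincomb[OF gd(1) gs(1)] coeff by (simp add: algebra_simps)
    then show ?case by (simp add: \<beta>)
  qed
qed

end

section \<open>The resolvent forms of \<open>A\<^sub>1\<^sub>,\<^sub>1(U, k)\<close>\<close>

lemma cos_add_cos_le:
  fixes a b :: real
  assumes "-pi \<le> b" and "b < pi"
  shows "cos (a + b) + cos a \<le> 2 * cos (b / 2)"
proof -
  have "cos (a + b) + cos a = 2 * cos ((a + b + a) / 2) * cos (b / 2)"
    using cos_plus_cos[of "a + b" a] by simp
  moreover have "0 \<le> cos (b / 2)"
    using assms by (intro cos_ge_zero) auto
  ultimately show ?thesis
    using mult_right_mono[OF cos_le_one[of "(a + b + a) / 2"], of "cos (b / 2)"] by simp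
qed

lemma ffk_bounds:
  assumes eps: "0 \<le> eps" and k: "k \<in> T2"
  shows "zzk eps k \<le> ffk eps k p" and "ffk eps k p \<le> 8 * eps"
proof -
  obtain k1 k2 where kk: "k = (k1, k2)" by (cases k)
  obtain q1 q2 where pp: "p = (q1, q2)" by (cases p)
  have "-pi \<le> k1" "k1 < pi" "-pi \<le> k2" "k2 < pi"
    using k by (auto simp: T2_def kk)
  then have "cos (q1 + k1) + cos q1 \<le> 2 * cos (k1 / 2)" "cos (q2 + k2) + cos q2 \<le> 2 * cos (k2 / 2)"
    by (simp_all add: cos_add_cos_le)
  then have "eps * (4 - 2 * (cos (k1 / 2) + cos (k2 / 2))) \<le> eps * (4 - cos2 (p + k) - cos2 p)"
    by (intro mult_left_mono[OF _ eps]) (simp add: cos2_def kk pp)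
  then show "zzk eps k \<le> ffk eps k p"
    by (simp add: zzk_def ffk_def cos2_def half_def kk algebra_simps)
  have "4 - cos2 (p + k) - cos2 p \<le> 8"
    unfolding cos2_def using cos_ge_minus_one[of "fst (p + k)"] cos_ge_minus_one[of "snd (p + k)"]
      cos_ge_minus_one[of "fst p"] cos_ge_minus_one[of "snd p"] by linarith
  then have "eps * (4 - cos2 (p + k) - cos2 p) \<le> eps * 8"
    by (rule mult_left_mono[OF _ eps])
  then show "ffk eps k p \<le> 8 * eps"
    by (simp add: ffk_def mult.commute)
qed

lemma borel_measurable_ffk: "(\<lambda>p. ffk eps k p - lam) \<in> borel_measurable torus"
proof -
  have "continuous_on UNIV (\<lambda>p. ffk eps k p - lam)"
    unfolding ffk_def[abs_def] cos2_def by (intro continuous_intros)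
  then have "(\<lambda>p. ffk eps k p - lam) \<in> borel_measurable lborel"
    using borel_measurable_continuous_onI by simp
  then show ?thesis by (rule borel_measurable_torusI)
qed

lemma sone_eq_ehat: "sone = ehat (0, 0)"
  by (rule ext) (simp add: sone_def)

lemma L2_if_sqint: "sqint g \<Longrightarrow> L2 g"
  unfolding sqint_def L2_def by (auto intro: borel_measurable_torusI simp: integrable_torus_iff)

lemma L2_fhat_shift:
  assumes f: "(\<lambda>x. \<bar>f x\<bar>) summable_on UNIV"
  shows "L2 (\<lambda>p. fhat f (c + p))"
proof -
  have a: "norm_summable (\<lambda>x. complex_of_real (f x))" using f by simp
  have fhat_eq: "fhat f (c + p) = (\<Sum>\<^sub>\<infinity>x. of_real (f x) * ehat x (c + p))" for p
    unfolding fhat_def ehat_def by (rule infsum_cong) (simp add: mult.commute)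
  have cont: "continuous_on UNIV (\<lambda>p. ehat x (c + p))" for x
    unfolding ehat_def dotp_def by (intro continuous_intros)
  have "(\<lambda>p. ehat x (c + p)) \<in> borel_measurable torus" for x
    using borel_measurable_continuous_onI[OF cont[of x]] by (intro borel_measurable_torusI) simp
  then have "(\<lambda>p. fhat f (c + p)) \<in> borel_measurable torus"
    unfolding fhat_eq by (rule borel_measurable_infsum_bounded[OF a]) simp
  moreover have "cmod (fhat f (c + p)) \<le> (\<Sum>\<^sub>\<infinity>x. cmod (complex_of_real (f x)))" for p
    unfolding fhat_eq by (rule norm_infsum_bounded_le[OF a]) simp
  ultimately show ?thesis
    by (rule L2_bounded)
qed

lemma L2_ddk:
  assumes "(\<lambda>x. \<bar>p1 x\<bar>) summable_on UNIV" and "(\<lambda>x. \<bar>p2 x\<bar>) summable_on UNIV"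
  shows "L2 (ddk p1 p2 k)"
  unfolding ddk_def[abs_def] by (rule L2_add[OF L2_fhat_shift[OF assms(1)] L2_fhat_shift[OF assms(2)]])

lemma summable_abs_if_exp_weighted:
  assumes "0 < \<alpha>" and "(\<lambda>z. exp (\<alpha> * znorm z) * \<bar>f z\<bar>) summable_on UNIV"
  shows "(\<lambda>z. \<bar>f z\<bar>) summable_on UNIV"
proof (rule summable_on_comparison_test[OF assms(2)])
  show "\<bar>f z\<bar> \<le> exp (\<alpha> * znorm z) * \<bar>f z\<bar>" for z
    using assms(1) by (simp add: znorm_def mult_le_cancel_right1)
qed simp

locale torus_resolvent = summable_weights u for u +
  fixes eps :: real and k :: "real \<times> real" and lam :: real
  assumes eps_nonneg: "0 \<le> eps" and k_in_T2: "k \<in> T2" and lam_below: "lam < zzk eps k"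

sublocale torus_resolvent \<subseteq>
  coercive_multiplier u "\<lambda>p. ffk eps k p - lam" "zzk eps k - lam" "8 * eps - lam"
  using borel_measurable_ffk lam_below ffk_bounds[OF eps_nonneg k_in_T2]
  by unfold_locales (auto simp: algebra_simps)

context torus_resolvent
begin

lemma Aop_eq_Apert: "Aop eps u U k g p - of_real lam * g p = Apert U g p"
  by (simp add: Aop_def Apert_def Bop_def proj_sum_def algebra_simps)

text \<open>The value of \<^const>\<open>rform\<close> is determined because the solution is unique up to null
  sets, by coercivity of \<^term>\<open>Apert U\<close>; any \<^const>\<open>L2\<close> solution, truncated to \<^const>\<open>T2\<close>,
  is a witness.\<close>
lemma rform_eq_l2inner:
  assumes U: "0 \<le> U" and f: "L2 f" and h: "L2 h" and g: "L2 g"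
    and sol: "AE p in torus. Apert U g p = h p"
  shows "rform eps u U k lam f h = l2inner f g"
proof (unfold rform_def, rule the_equality)
  define g' where "g' p = indicator T2 p *\<^sub>R g p" for p
  have g'_eq: "p \<in> T2 \<Longrightarrow> g' p = g p" for p
    by (simp add: g'_def)
  have l2inner_g': "l2inner f' g' = l2inner f' g" for f'
    unfolding l2inner_torus
    by (intro arg_cong[where f="\<lambda>x. _ * x"] Bochner_Integration.integral_cong) (auto simp: g'_eq)
  have Apert_g': "Apert U g' p = Apert U g p" if "p \<in> T2" for p
    unfolding Apert_def Bop_def proj_sum_def l2inner_g' g'_eq[OF that] ..
  have "sqint g'"
    unfolding sqint_def
  proof
    show "g' \<in> borel_measurable lborel"
      using L2_borel_measurable[OF g] unfolding torus_def g'_def[abs_def]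
      by (subst (asm) borel_measurable_restrict_space_iff) auto
    have "integrable torus (\<lambda>p. (cmod (g' p))\<^sup>2) = integrable torus (\<lambda>p. (cmod (g p))\<^sup>2)"
      by (rule Bochner_Integration.integrable_cong) (auto simp: g'_eq)
    then show "set_integrable lborel T2 (\<lambda>p. (cmod (g' p))\<^sup>2)"
      using g by (simp add: L2_def integrable_torus_iff[symmetric])
  qed
  moreover have "AE p in lborel. p \<in> T2 \<longrightarrow> Aop eps u U k g' p - of_real lam * g' p = h p"
    unfolding AE_torus_iff Aop_eq_Apert using sol by (rule AE_mp) (rule AE_I2, simp add: Apert_g')
  ultimately show "\<exists>g2. sqint g2 \<and> (AE p in lborel. p \<in> T2 \<longrightarrow> Aop eps u U k g2 p - of_real lam * g2 p = h p)
      \<and> l2inner f g = l2inner f g2"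
    by (metis l2inner_g')
  fix c
  assume "\<exists>g2. sqint g2 \<and> (AE p in lborel. p \<in> T2 \<longrightarrow> Aop eps u U k g2 p - of_real lam * g2 p = h p)
      \<and> c = l2inner f g2"
  then obtain g2 where g2: "sqint g2" "AE p in torus. Apert U g2 p = h p" and c: "c = l2inner f g2"
    unfolding AE_torus_iff Aop_eq_Apert by blast
  show "c = l2inner f g"
    unfolding c by (rule l2inner_Apert_solution_unique[OF U f L2_if_sqint[OF g2(1)] g g2(2) sol])
qed

lemma resolvent_rank_one:
  assumes d: "L2 d"
  obtains s :: real and R :: complex and d0 :: real
  where "0 < s" and "(cmod R)\<^sup>2 \<le> s * d0"
    and "rform eps u 0 k lam sone sone = of_real s"
    and "rform eps u 0 k lam sone d = R"
    and "rform eps u 0 k lam d d = of_real d0"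
    and "\<And>U. 0 \<le> U \<Longrightarrow>
      rform eps u U k lam d d = of_real d0 - of_real U * R / (1 + of_real U * of_real s) * cnj R"
proof -
  have sone: "L2 sone"
    unfolding sone_eq_ehat by (rule L2_ehat)
  obtain gs where gs: "L2 gs" "AE p in torus. Bop gs p = sone p"
    using Bop_solvable[OF sone] by blast
  note gs' = gs(1) gs(2)[unfolded sone_eq_ehat]
  obtain gd where gd: "L2 gd" "AE p in torus. Bop gd p = d p"
    using Bop_solvable[OF d] by blast
  have rform_0: "rform eps u 0 k lam f h = l2inner f g"
    if "L2 f" "L2 h" "L2 g" "AE p in torus. Bop g p = h p" for f h g
    using that by (intro rform_eq_l2inner) (simp_all add: Apert_0)
  define s where "s = Re (Bform gs gs)"
  define d0 where "d0 = Re (Bform gd gd)"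
  define R where "R = Bform gs gd"
  have ss: "Bform gs gs = of_real s"
    unfolding s_def by (rule Bform_self_real[OF gs(1)])
  have sd: "l2inner sone g = Bform gs g" if "L2 g" for g
    by (rule l2inner_Bop_solution[OF gs(1) that gs(2) sone])
  have dd: "l2inner d g = Bform gd g" if "L2 g" for g
    by (rule l2inner_Bop_solution[OF gd(1) that gd(2) d])
  show ?thesis
  proof
    show "0 < s" unfolding s_def by (rule Bform_solution_pos[OF gs'])
    show "(cmod R)\<^sup>2 \<le> s * d0"
      unfolding R_def s_def d0_def by (rule Bform_Cauchy_Schwarz[OF gs(1) gd(1)])
    show "rform eps u 0 k lam sone sone = of_real s"
      using rform_0[OF sone sone gs] sd[OF gs(1)] ss by simp
    show "rform eps u 0 k lam sone d = R"
      unfolding R_def using rform_0[OF sone d gd] sd[OF gd(1)] by simp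
    show "rform eps u 0 k lam d d = of_real d0"
      unfolding d0_def using rform_0[OF d d gd(1) gd(2)] dd[OF gd(1)] Bform_self_real[OF gd(1)] by simp
    fix U :: real
    assume U: "0 \<le> U"
    define \<beta> where "\<beta> = of_real U * Bform gs gd / (1 + of_real U * Bform gs gs)"
    have "rform eps u U k lam d d = l2inner d (\<lambda>p. gd p - \<beta> * gs p)"
      using Apert_rank_one_solution[OF gs' gd U] unfolding \<beta>_def[symmetric]
      by (intro rform_eq_l2inner[OF U d d L2_lincomb[OF gd(1) gs(1)]])
    also have "\<dots> = Bform gd gd - \<beta> * Bform gd gs"
      by (simp add: l2inner_lincomb_right[OF d gd(1) gs(1)] dd gd(1) gs(1))
    also have "\<dots> = of_real d0 - of_real U * R / (1 + of_real U * of_real s) * cnj R"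
      unfolding \<beta>_def R_def d0_def ss[symmetric]
      using Bform_self_real[OF gd(1)] Bform_hermitian[OF gs(1) gd(1)] by simp
    finally show "rform eps u U k lam d d = of_real d0 - of_real U * R / (1 + of_real U * of_real s) * cnj R" .
  qed
qed

end

lemma rank_one_resolvent_bounds:
  fixes s d0 U :: real and R :: complex
  assumes s: "0 < s" and U: "0 \<le> U" and cs: "(cmod R)\<^sup>2 \<le> s * d0"
  defines "T_inf \<equiv> (of_real d0 * of_real s - of_real ((cmod R)\<^sup>2)) / complex_of_real s"
  shows "T_inf \<in> \<real>" and "0 \<le> Re T_inf"
    and "let D = (of_real d0 - of_real U * R / (1 + of_real U * of_real s) * cnj R) - T_inf;
             B = of_real d0 / (1 + of_real U * of_real s)
         in D \<in> \<real> \<and> B \<in> \<real> \<and> 0 \<le> Re D \<and> Re D \<le> Re B"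
proof -
  define r where "r = (cmod R)\<^sup>2"
  have us: "0 < 1 + U * s" using U s by (simp add: add_pos_nonneg)
  have T: "T_inf = of_real ((d0 * s - r) / s)"
    unfolding T_inf_def r_def by simp
  have Rc: "R * cnj R = of_real r"
    unfolding r_def by (rule complex_norm_square[symmetric])
  have pert: "of_real U * R / (1 + of_real U * of_real s) * cnj R = of_real (U * r / (1 + U * s))"
    by (simp add: Rc[symmetric] mult.commute mult.left_commute)
  have "d0 - U * r / (1 + U * s) - (d0 * s - r) / s = r / (s * (1 + U * s))"
    using s us by (simp add: field_simps)
  then have D: "(of_real d0 - of_real U * R / (1 + of_real U * of_real s) * cnj R) - T_inf
      = of_real (r / (s * (1 + U * s)))"
    unfolding T pert by (simp only: of_real_diff[symmetric])
  have B: "of_real d0 / (1 + of_real U * of_real s) = (of_real (d0 / (1 + U * s)) :: complex)"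
    by simp
  have "r / s \<le> d0"
    using cs s unfolding r_def by (simp add: field_simps mult.commute)
  then have "r / s / (1 + U * s) \<le> d0 / (1 + U * s)"
    by (rule divide_right_mono) (use us in simp)
  then have "r / (s * (1 + U * s)) \<le> d0 / (1 + U * s)"
    by (simp only: divide_divide_eq_left)
  moreover have "0 \<le> r / (s * (1 + U * s))" and "0 \<le> (d0 * s - r) / s"
    using s us cs unfolding r_def by (simp_all add: mult.commute)
  ultimately show "T_inf \<in> \<real>" "0 \<le> Re T_inf"
    "let D = (of_real d0 - of_real U * R / (1 + of_real U * of_real s) * cnj R) - T_inf;
         B = of_real d0 / (1 + of_real U * of_real s)
     in D \<in> \<real> \<and> B \<in> \<real> \<and> 0 \<le> Re D \<and> Re D \<le> Re B"
    unfolding Let_def D B unfolding T by simp_all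
qed

theorem corollary4p13:
  fixes eps :: real and u p1 p2 :: "int \<times> int \<Rightarrow> real"
    and k :: "real \<times> real" and lam :: real
  assumes eps: "eps \<ge> 0"
    and u_nonneg: "\<forall>x. u x \<ge> 0"
    and u_summ: "u summable_on UNIV"
    and u_rot: "\<forall>z. u (rot90 z) = u z"
    and p1_rot: "\<forall>z. p1 (rot90 z) = p1 z"
    and p2_rot: "\<forall>z. p2 (rot90 z) = p2 z"
    and p_exp: "\<exists>\<alpha>0>0. (\<lambda>z. exp (\<alpha>0 * znorm z) * \<bar>p1 z\<bar>) summable_on UNIV \<and>
                        (\<lambda>z. exp (\<alpha>0 * znorm z) * \<bar>p2 z\<bar>) summable_on UNIV"
    and p2_supp: "\<forall>z. \<not> (even (fst z) \<and> even (snd z)) \<longrightarrow> p2 z = 0"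
    and p_nz: "(\<lambda>z. p1 z + p2 z) \<noteq> (\<lambda>z. 0)"
    and p_nondeg: "\<forall>q\<in>T2. \<exists>x. complex_of_real (p2 x) \<noteq>
                      - exp (\<i> * of_real (dotp q x / 2)) * complex_of_real (p1 x)"
    and k: "k \<in> T2"
    and lam: "lam < zzk eps k"
  shows "Tinf eps u p1 p2 k lam \<in> \<real> \<and> Re (Tinf eps u p1 p2 k lam) \<ge> 0 \<and>
    (\<forall>U::real. U \<ge> 0 \<longrightarrow>
       (let D = TT eps u p1 p2 U k lam - Tinf eps u p1 p2 k lam;
            B = Rdd eps u p1 p2 k lam / (1 + of_real U * Rss eps u k lam)
        in D \<in> \<real> \<and> B \<in> \<real> \<and> 0 \<le> Re D \<and> Re D \<le> Re B))"
proof -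
  interpret torus_resolvent u eps k lam
    using eps u_nonneg u_summ k lam by unfold_locales auto
  obtain \<alpha> where "0 < \<alpha>" and "(\<lambda>z. exp (\<alpha> * znorm z) * \<bar>p1 z\<bar>) summable_on UNIV"
    and "(\<lambda>z. exp (\<alpha> * znorm z) * \<bar>p2 z\<bar>) summable_on UNIV"
    using p_exp by blast
  then have "L2 (ddk p1 p2 k)"
    by (intro L2_ddk summable_abs_if_exp_weighted)
  then obtain s R d0 where "0 < s" "(cmod R)\<^sup>2 \<le> s * d0"
    and R: "rform eps u 0 k lam sone sone = of_real s" "rform eps u 0 k lam sone (ddk p1 p2 k) = R"
      "rform eps u 0 k lam (ddk p1 p2 k) (ddk p1 p2 k) = of_real d0"
    and T: "\<And>U. 0 \<le> U \<Longrightarrow> rform eps u U k lam (ddk p1 p2 k) (ddk p1 p2 k)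
      = of_real d0 - of_real U * R / (1 + of_real U * of_real s) * cnj R"
    by (rule resolvent_rank_one) (rule that)
  note bounds = rank_one_resolvent_bounds[OF \<open>0 < s\<close> _ \<open>(cmod R)\<^sup>2 \<le> s * d0\<close>]
  show ?thesis
    unfolding Tinf_def Rss_def Rsd_def Rdd_def TT_def R
    by (intro conjI allI impI bounds(1,2)[OF order_refl]) (simp only: T bounds(3))
qed

end
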